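(* Let $N\ge 1$, let $Y=(y_1,\dots,y_N)\in\mathbb{W}^N$, let $x\in\mathbb{Z}$, $t\ge 0$, and let $C$ be a counterclockwise circle centered at the origin with radius $r\in(0,1)$. Then for each $k=0,1,\dots,N$, \[ \mathbb{P}_{(Y,\nu^{(k)})}(E_{t,k,x}) = \frac{1}{(2\pi i)^N}\oint_C\cdots\oint_C\prod_{i=1}^k(1-\xi_i)\prod_{1\leq i<j\leq N}\frac{\xi_j-\xi_i}{1-\xi_i}\prod_{i=1}^N\frac{1}{1-\xi_i}\prod_{i=1}^N\Big(\xi_i^{x-y_i-1}e^{\varepsilon(\xi_i)t}\Big)\,d\xi_1\cdots d\xi_N, \] where $\prod_{i=1}^0(\cdot)=1$.
   Context: TASEP with second class particles: $N$ particles occupy distinct sites of $\mathbb{Z}$; each particle carries a label $1$ or $2$ (label-$2$ particles are "first class", label-$1$ particles are "second class"). Each particle independently, at rate $1$ (after an exponential waiting time with mean 1), attempts to jump to the neighboring site to its right: if that site is empty the jump occurs; if it is occupied by a particle of the same label the jump is suppressed; if a label-$2$ particle attempts to jump onto a site occupied by a label-$1$ particle, the two particles exchange positions; if a label-$1$ particle attempts to jump onto a site occupied by a label-$2$ particle, the jump is suppressed. $\mathbb{W}^N=\{(x_1,\dots,x_N)\in\mathbb{Z}^N: x_1<\dots<x_N\}$. A state is a pair $(X,\pi)$ with $X=(x_1,\dots,x_N)\in\mathbb{W}^N$ and $\pi=(\pi_1\cdots\pi_N)\in\{1,2\}^N$, meaning the $i$-th particle from the left is at $x_i$ and has label $\pi_i$.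 For $1\le k\le N$, $\nu^{(k)}$ is the sequence with $\nu^{(k)}_1=\dots=\nu^{(k)}_k=2$ and $\nu^{(k)}_{k+1}=\dots=\nu^{(k)}_N=1$; $\nu^{(0)}=(1,\dots,1)$. For $1\le k\le N$, $E_{t,k,x}$ is the event that at time $t$ the state is $(X,\nu^{(k)})$ for some $X$ with $x_1=x,x_2=x+1,\dots,x_k=x+k-1$ (i.e., the labels are still in the order $\nu^{(k)}$ and the $k$ first class particles occupy $x,\dots,x+k-1$); $E_{t,0,x}$ is the event that at time $t$ the state is $(X,\nu^{(0)})$ with $x_1\ge x$. $\mathbb{P}_{(Y,\nu)}$ is the law of the process started from state $(Y,\nu)$. $\varepsilon(\xi)=1/\xi-1$. *)

theory Defs
  imports "HOL-Analysis.Analysis"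
begin

text \<open>States: (X, pi) with X the ordered positions (int list, length N) and pi the
labels (nat list, entries 1 or 2) of the particles read from left to right.\<close>

type_synonym state = "int list \<times> nat list"

definition weyl :: "nat \<Rightarrow> int list set" where
  "weyl N = {X. length X = N \<and> sorted_wrt (<) X}"

definition attempt :: "nat \<Rightarrow> state \<Rightarrow> state" where
  "attempt i s = (let (X, p) = s in
     if Suc i < length X \<and> X ! Suc i = X ! i + 1 then
       (if p ! i = 2 \<and> p ! Suc i = 1
        then (X, p[i := p ! Suc i, Suc i := p ! i])
        else (X, p))
     else (X[i := X ! i + 1], p))"

text \<open>Probability that the event E holds after n attempted jumps, each made by a
uniformly chosen particle (embedded jump chain of the uniformized process).\<close>
fun jump_prob :: "nat \<Rightarrow> nat \<Rightarrow> (state \<Rightarrow> bool) \<Rightarrow> state \<Rightarrow> real" where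
  "jump_prob N 0 E s = (if E s then 1 else 0)"
| "jump_prob N (Suc n) E s = (\<Sum>i<N. jump_prob N n E (attempt i s)) / real N"

text \<open>Law of the continuous-time process: each particle carries an independent rate-1
exponential clock; equivalently a Poisson clock of rate N picks a uniform particle.\<close>
definition tasep_prob :: "nat \<Rightarrow> real \<Rightarrow> state \<Rightarrow> (state \<Rightarrow> bool) \<Rightarrow> real" where
  "tasep_prob N t s E =
     (\<Sum>n. exp (- real N * t) * (real N * t) ^ n / fact n * jump_prob N n E s)"

definition nu :: "nat \<Rightarrow> nat \<Rightarrow> nat list" where
  "nu N k = replicate k 2 @ replicate (N - k) 1"

definition event_E :: "nat \<Rightarrow> nat \<Rightarrow> int \<Rightarrow> state \<Rightarrow> bool" where
  "event_E N k x s = (let (X, p) = s in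
     p = nu N k \<and>
     (if k = 0 then X ! 0 \<ge> x else (\<forall>j<k. X ! j = x + int j)))"

definition eps :: "complex \<Rightarrow> complex" where
  "eps z = 1 / z - 1"

fun circ_ints :: "real \<Rightarrow> nat \<Rightarrow> (complex list \<Rightarrow> complex) \<Rightarrow> complex" where
  "circ_ints r 0 F = F []"
| "circ_ints r (Suc n) F =
     integral {0..2*pi} (\<lambda>\<theta>. circ_ints r n (\<lambda>zs. F (of_real r * exp (\<i> * of_real \<theta>) # zs))
                               * (\<i> * of_real r * exp (\<i> * of_real \<theta>)))"

definition integrand :: "nat \<Rightarrow> nat \<Rightarrow> int \<Rightarrow> real \<Rightarrow> int list \<Rightarrow> complex list \<Rightarrow> complex" where
  "integrand N k x t Y zs =
     (\<Prod>i<k. 1 - zs ! i) *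
     (\<Prod>j<N. \<Prod>i<j. (zs ! j - zs ! i) / (1 - zs ! i)) *
     (\<Prod>i<N. 1 / (1 - zs ! i)) *
     (\<Prod>i<N. zs ! i powi (x - Y ! i - 1) * exp (eps (zs ! i) * of_real t))"

end

theory Submission
  imports Defs "HOL-Computational_Algebra.Polynomial" "HOL-Combinatorics.Permutations"
begin

text \<open>
  On the torus \<open>|\<xi>\<^sub>i| = r < 1\<close> every factor of the integrand has an absolutely convergent Laurent
  expansion, and the iterated circle integral is \<open>(2\<pi>i)\<^sup>N\<close> times the coefficient of
  \<open>\<xi>\<^sub>1\<^sup>-\<^sup>1 \<cdots> \<xi>\<^sub>N\<^sup>-\<^sup>1\<close>. Since \<open>\<Sum>\<^sub>i \<epsilon>(\<xi>\<^sub>i) = -N + \<Sum>\<^sub>i \<xi>\<^sub>i\<^sup>-\<^sup>1\<close>, expanding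
  \<open>exp (t \<Sum>\<^sub>i \<xi>\<^sub>i\<^sup>-\<^sup>1)\<close> turns the integral into \<open>\<Sum>\<^sub>n e\<^sup>-\<^sup>N\<^sup>t t\<^sup>n/n! \<cdot> u\<^sub>n(Y)\<close>, where multiplying by
  \<open>\<Sum>\<^sub>i \<xi>\<^sub>i\<^sup>-\<^sup>1\<close> moves one particle at a time: \<open>u\<^sub>n\<^sub>+\<^sub>1(X) = \<Sum>\<^sub>i u\<^sub>n(X + e\<^sub>i)\<close>. This is the
  recursion of the jump chain, provided the boundary terms behave: a jump onto a particle of the same
  class changes nothing and a first class particle may not exchange with the second class particle
  following it (the event would be lost). Both follow from antisymmetry of the integrand under
  \<open>\<xi>\<^sub>i \<leftrightarrow> \<xi>\<^sub>i\<^sub>+\<^sub>1\<close> when the exponents of \<open>\<xi>\<^sub>i\<close> and \<open>\<xi>\<^sub>i\<^sub>+\<^sub>1\<close> agree. The initial condition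
  \<open>u\<^sub>0\<close> is computed by integrating out \<open>\<xi>\<^sub>N\<close> first: only the pole at \<open>\<xi>\<^sub>N = 1\<close> contributes.
\<close>

section \<open>Circle integrals of Laurent series\<close>

definition circle_point :: "real \<Rightarrow> real \<Rightarrow> complex" where
  "circle_point r \<theta> = of_real r * exp (\<i> * of_real \<theta>)"

lemma norm_circle_point [simp]: "r \<ge> 0 \<Longrightarrow> norm (circle_point r \<theta>) = r"
  by (simp add: circle_point_def norm_mult)

lemma circle_point_powi_times_derivative:
  assumes "r > 0"
  shows "circle_point r \<theta> powi j * (\<i> * of_real r * exp (\<i> * of_real \<theta>)) =
         \<i> * of_real (r powi (j+1)) * exp (\<i> * of_int (j+1) * of_real \<theta>)"
proof -
  have "circle_point r \<theta> powi j * (\<i> * of_real r * exp (\<i> * of_real \<theta>)) =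
        \<i> * (circle_point r \<theta> powi j * circle_point r \<theta>)"
    by (simp add: circle_point_def)
  also have "circle_point r \<theta> powi j * circle_point r \<theta> = circle_point r \<theta> powi (j+1)"
    using assms by (simp add: power_int_add circle_point_def)
  also have "\<dots> = of_real (r powi (j+1)) * exp (\<i> * of_int (j+1) * of_real \<theta>)"
    by (simp add: circle_point_def power_int_mult_distrib exp_power_int mult_ac)
  finally show ?thesis by simp
qed

lemma has_integral_circle_term:
  "((\<lambda>\<theta>. \<i> * of_real (r powi (j+1)) * exp (\<i> * of_int (j+1) * of_real \<theta>)) has_integral
     (if j = -1 then 2 * of_real pi * \<i> else 0)) {0..2*pi}"
proof (cases "j = -1")
  case True
  then show ?thesis
    using has_integral_const_real[of "\<i>" 0 "2*pi"] by (simp add: mult_ac scaleR_conv_of_real)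
next
  case False
  define k where "k = j + 1"
  have "k \<noteq> 0" using False k_def by auto
  define F where "F \<theta> = of_real (r powi k) * exp (\<i> * of_int k * of_real \<theta>) / of_int k" for \<theta> :: real
  have "(F has_vector_derivative (\<i> * of_real (r powi k) * exp (\<i> * of_int k * of_real \<theta>)))
          (at \<theta> within {0..2*pi})" for \<theta>
  proof -
    have "((\<lambda>z. of_real (r powi k) * exp (\<i> * of_int k * z) / of_int k) has_field_derivative
           (\<i> * of_real (r powi k) * exp (\<i> * of_int k * of_real \<theta>))) (at (of_real \<theta>))"
      using \<open>k \<noteq> 0\<close> by (auto intro!: derivative_eq_intros simp: field_simps)
    from has_vector_derivative_real_field[OF this] show ?thesis unfolding F_def .
  qed
  moreover have "F (2*pi) = F 0"
    using exp_integer_2pi[of "of_int k"] by (simp add: F_def mult_ac)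
  ultimately show ?thesis
    using fundamental_theorem_of_calculus[of 0 "2*pi" F] False k_def by simp
qed

lemma has_sum_imp_symmetric_partial_sums:
  assumes "(f has_sum S) (UNIV :: int set)"
  shows "(\<lambda>K::nat. \<Sum>j\<in>{-int K..int K}. f j) \<longlonglongrightarrow> S"
proof -
  have "filterlim (\<lambda>K::nat. {-int K..int K}) (finite_subsets_at_top UNIV) sequentially"
  proof (rule filterlim_atLeastAtMost_at_bot_at_top)
    show "filterlim (\<lambda>K::nat. - int K) at_bot sequentially"
    proof (subst filterlim_at_bot, intro allI)
      fix Z :: int show "eventually (\<lambda>K. - int K \<le> Z) sequentially"
        unfolding eventually_sequentially by (rule exI[of _ "nat (-Z)"]) auto
    qed
  qed (auto simp: filterlim_int_sequentially)
  from filterlim_compose[OF assms[unfolded has_sum_def] this] show ?thesis by (simp add: o_def)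
qed

text \<open>Termwise integration is justified by dominated convergence of the symmetric partial sums.\<close>

lemma circle_integral_laurent:
  fixes b :: "int \<Rightarrow> complex"
  assumes r: "r > 0" and sm: "(\<lambda>j. norm (b j) * r powi j) summable_on UNIV"
  shows "integral {0..2*pi}
           (\<lambda>\<theta>. (\<Sum>\<^sub>\<infinity>j. b j * circle_point r \<theta> powi j) * (\<i> * of_real r * exp (\<i> * of_real \<theta>)))
         = 2 * of_real pi * \<i> * b (-1)"
proof -
  define f where "f K \<theta> = (\<Sum>j\<in>{-int K..int K}.
      b j * (\<i> * of_real (r powi (j+1)) * exp (\<i> * of_int (j+1) * of_real \<theta>)))" for K :: nat and \<theta>
  define g where "g \<theta> = (\<Sum>\<^sub>\<infinity>j. b j * circle_point r \<theta> powi j) * (\<i> * of_real r * exp (\<i> * of_real \<theta>))" for \<theta>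
  define B where "B = (\<Sum>\<^sub>\<infinity>j. norm (b j) * r powi j)"
  have f_integral: "(f K has_integral (\<Sum>j\<in>{-int K..int K}. b j * (if j = -1 then 2 * of_real pi * \<i> else 0)))
                      {0..2*pi}" for K
    unfolding f_def by (intro has_integral_sum has_integral_mult_right has_integral_circle_term) auto
  have f_integral_eq: "(\<Sum>j\<in>{-int K..int K}. b j * (if j = -1 then 2 * of_real pi * \<i> else 0)) =
                         2 * of_real pi * \<i> * b (-1)" if "K \<ge> 1" for K
  proof -
    have "(\<Sum>j\<in>{-int K..int K}. b j * (if j = -1 then 2 * of_real pi * \<i> else 0)) =
          (\<Sum>j\<in>{-int K..int K}. if j = -1 then b j * (2 * of_real pi * \<i>) else 0)"
      by (intro sum.cong) auto
    also have "\<dots> = b (-1) * (2 * of_real pi * \<i>)" using that by (simp add: sum.delta)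
    finally show ?thesis by (simp add: mult_ac)
  qed
  have terms_summable: "(\<lambda>j. b j * circle_point r \<theta> powi j) summable_on UNIV" for \<theta>
    by (rule abs_summable_summable) (use sm r in \<open>simp add: norm_mult norm_power_int\<close>)
  have f_eq: "f K \<theta> = (\<Sum>j\<in>{-int K..int K}. b j * circle_point r \<theta> powi j) *
                        (\<i> * of_real r * exp (\<i> * of_real \<theta>))" for K \<theta>
    unfolding f_def sum_distrib_right
    by (intro sum.cong refl) (simp only: mult.assoc circle_point_powi_times_derivative[OF r, unfolded mult.assoc])
  have f_tendsto: "(\<lambda>K. f K \<theta>) \<longlonglongrightarrow> g \<theta>" for \<theta>
    unfolding f_eq g_def by (intro tendsto_mult_right has_sum_imp_symmetric_partial_sums has_sum_infsum terms_summable)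
  have f_bounded: "norm (f K \<theta>) \<le> B * r" for K \<theta>
  proof -
    have "norm (\<Sum>j\<in>{-int K..int K}. b j * circle_point r \<theta> powi j) \<le> (\<Sum>j\<in>{-int K..int K}. norm (b j) * r powi j)"
      by (rule order_trans[OF norm_sum]) (use r in \<open>simp add: norm_mult norm_power_int\<close>)
    also have "\<dots> \<le> B"
      unfolding B_def by (rule finite_sum_le_infsum[OF sm]) (use r in auto)
    finally show ?thesis unfolding f_eq using r by (simp add: norm_mult)
  qed
  have "(\<lambda>K. integral {0..2*pi} (f K)) \<longlonglongrightarrow> integral {0..2*pi} g"
    using dominated_convergence[of f "{0..2*pi}" "\<lambda>_. B * r" g] f_integral f_bounded f_tendsto by auto
  moreover have "(\<lambda>K. integral {0..2*pi} (f K)) \<longlonglongrightarrow> 2 * of_real pi * \<i> * b (-1)"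
    by (rule tendsto_eventually, rule eventually_mono[OF eventually_ge_at_top[of 1]])
       (use integral_unique[OF f_integral] f_integral_eq in simp)
  ultimately show ?thesis unfolding g_def using LIMSEQ_unique by blast
qed

section \<open>Absolutely convergent Laurent expansions on a torus\<close>

definition exponent_lists :: "nat \<Rightarrow> int list set" where
  "exponent_lists n = {m. length m = n}"

definition torus :: "real \<Rightarrow> nat \<Rightarrow> complex list set" where
  "torus r n = {zs. length zs = n \<and> (\<forall>z\<in>set zs. norm z = r)}"

definition laurent_monomial :: "int list \<Rightarrow> complex list \<Rightarrow> complex" where
  "laurent_monomial m zs = (\<Prod>i<length m. zs ! i powi m ! i)"

definition monomial_weight :: "real \<Rightarrow> int list \<Rightarrow> real" where
  "monomial_weight r m = (\<Prod>i<length m. r powi m ! i)"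

text \<open>Unconditional summation (\<open>has_sum\<close>) of complex numbers is absolute, so a Laurent expansion
  converges absolutely on the torus.\<close>

definition laurent_expansion ::
    "real \<Rightarrow> nat \<Rightarrow> (complex list \<Rightarrow> complex) \<Rightarrow> (int list \<Rightarrow> complex) \<Rightarrow> bool" where
  "laurent_expansion r n F c \<longleftrightarrow>
     (\<forall>zs\<in>torus r n. ((\<lambda>m. c m * laurent_monomial m zs) has_sum F zs) (exponent_lists n))"

definition laurent_norm :: "real \<Rightarrow> nat \<Rightarrow> (int list \<Rightarrow> complex) \<Rightarrow> real" where
  "laurent_norm r n c = (\<Sum>\<^sub>\<infinity>m\<in>exponent_lists n. norm (c m) * monomial_weight r m)"

lemma laurent_monomial_Nil [simp]: "laurent_monomial [] zs = 1"
  by (simp add: laurent_monomial_def)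

lemma laurent_monomial_Cons [simp]:
  "laurent_monomial (j # m) (z # zs) = z powi j * laurent_monomial m zs"
  unfolding laurent_monomial_def length_Cons prod.lessThan_Suc_shift by simp

lemma monomial_weight_Cons [simp]: "monomial_weight r (j # m) = r powi j * monomial_weight r m"
  unfolding monomial_weight_def length_Cons prod.lessThan_Suc_shift by simp

lemma monomial_weight_nonneg: "r \<ge> 0 \<Longrightarrow> monomial_weight r m \<ge> 0"
  unfolding monomial_weight_def by (intro prod_nonneg) auto

lemma torus_0 [simp]: "torus r 0 = {[]}"
  by (auto simp: torus_def)

lemma Cons_in_torus_iff [simp]: "z # zs \<in> torus r (Suc n) \<longleftrightarrow> norm z = r \<and> zs \<in> torus r n"
  by (auto simp: torus_def)

lemma replicate_in_torus: "r \<ge> 0 \<Longrightarrow> replicate n (of_real r) \<in> torus r n"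
  by (auto simp: torus_def)

lemma length_torus: "zs \<in> torus r n \<Longrightarrow> length zs = n"
  by (simp add: torus_def)

lemma norm_nth_torus: "zs \<in> torus r n \<Longrightarrow> i < n \<Longrightarrow> norm (zs ! i) = r"
  unfolding torus_def by (auto simp: nth_mem)

lemma nth_torus_nonzero: "zs \<in> torus r n \<Longrightarrow> r > 0 \<Longrightarrow> i < n \<Longrightarrow> zs ! i \<noteq> 0"
  using norm_nth_torus[of zs r n i] by auto

lemma nth_torus_neq_1: "zs \<in> torus r n \<Longrightarrow> r < 1 \<Longrightarrow> i < n \<Longrightarrow> zs ! i \<noteq> 1"
  using norm_nth_torus[of zs r n i] by auto

lemma norm_laurent_monomial:
  assumes "zs \<in> torus r n" "length m = n"
  shows "norm (laurent_monomial m zs) = monomial_weight r m"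
proof -
  have "norm (laurent_monomial m zs) = (\<Prod>i<length m. norm (zs ! i powi m ! i))"
    unfolding laurent_monomial_def by (simp add: prod_norm)
  also have "\<dots> = monomial_weight r m"
    unfolding monomial_weight_def using assms by (intro prod.cong) (auto simp: norm_power_int norm_nth_torus)
  finally show ?thesis .
qed

lemma laurent_expansion_abs_summable:
  assumes "laurent_expansion r n F c" "r \<ge> 0"
  shows "(\<lambda>m. norm (c m) * monomial_weight r m) summable_on exponent_lists n"
proof -
  let ?z = "replicate n (complex_of_real r)"
  have "(\<lambda>m. c m * laurent_monomial m ?z) summable_on exponent_lists n"
    using assms replicate_in_torus[OF assms(2)] unfolding laurent_expansion_def summable_on_def by blast
  then have "(\<lambda>m. norm (c m * laurent_monomial m ?z)) summable_on exponent_lists n"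
    using summable_on_iff_abs_summable_on_complex[THEN iffD1] by blast
  also have "?this \<longleftrightarrow> ?thesis"
    by (intro summable_on_cong)
       (auto simp: norm_mult norm_laurent_monomial[OF replicate_in_torus[OF assms(2)]] exponent_lists_def)
  finally show ?thesis .
qed

lemma has_sum_SigmaD_infsum:
  fixes f :: "'a \<times> 'b \<Rightarrow> complex"
  assumes "(f has_sum S) (A \<times> B)"
  shows "((\<lambda>x. \<Sum>\<^sub>\<infinity>y\<in>B. f (x, y)) has_sum S) A"
proof (rule has_sum_SigmaD[OF assms])
  fix x assume "x \<in> A"
  from assms have "(\<lambda>(x, y). f (x, y)) summable_on A \<times> B" by (auto simp: summable_on_def)
  from summable_on_SigmaD1[of "\<lambda>x y. f (x, y)", OF this \<open>x \<in> A\<close>]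
  show "((\<lambda>y. f (x, y)) has_sum (\<Sum>\<^sub>\<infinity>y\<in>B. f (x, y))) B" by simp
qed

text \<open>The iterated circle integral is computed variable by variable: integrating out the first variable
  keeps a Laurent expansion in the remaining ones (Fubini for absolutely summable families), and
  the one-variable residue formula picks the coefficient of the exponent \<open>-1\<close>.\<close>

theorem circ_ints_laurent_expansion:
  assumes "laurent_expansion r n F c" "r > 0"
  shows "circ_ints r n F = (2 * of_real pi * \<i>) ^ n * c (replicate n (-1))"
  using assms
proof (induction n arbitrary: F c)
  case 0
  then have "((\<lambda>m. c m * laurent_monomial m []) has_sum F []) {[]}"
    by (simp add: laurent_expansion_def exponent_lists_def)
  then show ?case
    using has_sum_unique has_sum_finite[of "{[]}" "\<lambda>m. c m * laurent_monomial m []"] by fastforce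
next
  case (Suc n)
  define d where "d \<theta> m' = (\<Sum>\<^sub>\<infinity>j. c (j # m') * circle_point r \<theta> powi j)" for \<theta> m'
  have inner: "laurent_expansion r n (\<lambda>zs. F (circle_point r \<theta> # zs)) (d \<theta>)" for \<theta>
    unfolding laurent_expansion_def
  proof
    fix zs assume zs: "zs \<in> torus r n"
    let ?w = "circle_point r \<theta>"
    have "((\<lambda>m. c m * laurent_monomial m (?w # zs)) has_sum F (?w # zs)) (exponent_lists (Suc n))"
      using Suc.prems zs by (simp add: laurent_expansion_def)
    then have "((\<lambda>(m', j). c (j # m') * ?w powi j * laurent_monomial m' zs) has_sum F (?w # zs))
                 (exponent_lists n \<times> UNIV)"
      by (rule has_sum_reindex_bij_witness[where i = "\<lambda>(m', j). j # m'" and j = "\<lambda>m. (tl m, hd m)",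
            THEN iffD1, rotated -1])
         (auto simp: exponent_lists_def length_Suc_conv)
    from has_sum_SigmaD_infsum[OF this]
    show "((\<lambda>m. d \<theta> m * laurent_monomial m zs) has_sum F (?w # zs)) (exponent_lists n)"
      by (simp add: d_def infsum_cmult_left')
  qed
  define b where "b j = c (j # replicate n (-1))" for j
  have "(\<lambda>j. norm (b j) * r powi j) summable_on UNIV"
  proof -
    let ?rep = "replicate n (-1::int)"
    have "(\<lambda>m. norm (c m) * monomial_weight r m) summable_on ((\<lambda>j. j # ?rep) ` UNIV)"
      by (rule summable_on_subset_banach[OF laurent_expansion_abs_summable[OF Suc.prems(1)]])
         (use Suc.prems(2) in \<open>auto simp: exponent_lists_def\<close>)
    then have "(\<lambda>j. (norm (b j) * r powi j) * monomial_weight r ?rep) summable_on UNIV"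
      by (subst (asm) summable_on_reindex) (auto simp: inj_on_def b_def o_def mult_ac)
    moreover have "monomial_weight r ?rep \<noteq> 0"
      using Suc.prems(2) unfolding monomial_weight_def by simp
    ultimately show ?thesis using summable_on_cmult_left' by blast
  qed
  moreover have "circ_ints r n (\<lambda>zs. F (circle_point r \<theta> # zs)) =
                   (2 * of_real pi * \<i>) ^ n * (\<Sum>\<^sub>\<infinity>j. b j * circle_point r \<theta> powi j)" for \<theta>
    using Suc.IH[OF inner Suc.prems(2)] by (simp add: d_def b_def)
  ultimately show ?case
    using circle_integral_laurent[OF Suc.prems(2)]
    by (simp add: circle_point_def[symmetric] mult.assoc b_def)
qed

lemma laurent_monomial_update:
  assumes "i < length m" "zs ! i \<noteq> 0"
  shows "laurent_monomial (m[i := m ! i + p]) zs = zs ! i powi p * laurent_monomial m zs"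
proof -
  have "laurent_monomial (m[i := m ! i + p]) zs =
          (\<Prod>l<length m. (if l = i then zs ! i powi p else 1) * zs ! l powi m ! l)"
    unfolding laurent_monomial_def using assms
    by (intro prod.cong) (auto simp: nth_list_update power_int_add)
  also have "\<dots> = zs ! i powi p * laurent_monomial m zs"
    unfolding prod.distrib laurent_monomial_def using assms by (simp add: prod.delta)
  finally show ?thesis .
qed

lemma monomial_weight_update:
  assumes "i < length m" "r > 0"
  shows "monomial_weight r (m[i := m ! i + p]) = r powi p * monomial_weight r m"
proof -
  have "monomial_weight r (m[i := m ! i + p]) =
          (\<Prod>l<length m. (if l = i then r powi p else 1) * r powi m ! l)"
    unfolding monomial_weight_def using assms
    by (intro prod.cong) (auto simp: nth_list_update power_int_add)
  also have "\<dots> = r powi p * monomial_weight r m"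
    unfolding prod.distrib monomial_weight_def using assms by (simp add: prod.delta)
  finally show ?thesis .
qed

lemma laurent_expansion_shift:
  assumes "laurent_expansion r n F c" "i < n" "r > 0"
  shows "laurent_expansion r n (\<lambda>zs. zs ! i powi p * F zs) (\<lambda>m. c (m[i := m ! i - p]))"
  unfolding laurent_expansion_def
proof
  fix zs assume zs: "zs \<in> torus r n"
  have "zs ! i \<noteq> 0" using nth_torus_nonzero[OF zs assms(3,2)] .
  have "((\<lambda>m. c m * laurent_monomial m zs) has_sum F zs) (exponent_lists n)"
    using assms(1) zs by (simp add: laurent_expansion_def)
  from has_sum_cmult_right[OF this, of "zs ! i powi p"]
  show "((\<lambda>m. c (m[i := m ! i - p]) * laurent_monomial m zs) has_sum zs ! i powi p * F zs)
          (exponent_lists n)"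
    by (rule has_sum_reindex_bij_witness[where i = "\<lambda>m. m[i := m ! i - p]" and j = "\<lambda>m. m[i := m ! i + p]",
          THEN iffD1, rotated -1])
       (use assms \<open>zs ! i \<noteq> 0\<close> in \<open>auto simp: exponent_lists_def laurent_monomial_update\<close>)
qed

lemma laurent_norm_shift:
  assumes "i < n" "r > 0"
  shows "laurent_norm r n (\<lambda>m. c (m[i := m ! i - p])) = r powi p * laurent_norm r n c"
proof -
  have "laurent_norm r n (\<lambda>m. c (m[i := m ! i - p])) =
          (\<Sum>\<^sub>\<infinity>m\<in>exponent_lists n. r powi p * (norm (c m) * monomial_weight r m))"
    unfolding laurent_norm_def
    by (rule infsum_reindex_bij_witness[where i = "\<lambda>m. m[i := m ! i + p]" and j = "\<lambda>m. m[i := m ! i - p]"])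
       (use assms in \<open>auto simp: exponent_lists_def monomial_weight_update[where p = "-p", simplified]
                                  power_int_minus field_simps\<close>)
  also have "\<dots> = r powi p * laurent_norm r n c"
    unfolding laurent_norm_def by (rule infsum_cmult_right')
  finally show ?thesis .
qed

lemma laurent_expansion_add:
  "laurent_expansion r n F c \<Longrightarrow> laurent_expansion r n G d \<Longrightarrow>
     laurent_expansion r n (\<lambda>zs. F zs + G zs) (\<lambda>m. c m + d m)"
  unfolding laurent_expansion_def by (auto simp: distrib_right intro!: has_sum_add)

lemma laurent_expansion_cmult:
  "laurent_expansion r n F c \<Longrightarrow> laurent_expansion r n (\<lambda>zs. a * F zs) (\<lambda>m. a * c m)"
  unfolding laurent_expansion_def by (auto simp: mult.assoc intro!: has_sum_cmult_right)

lemma laurent_expansion_sum: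
  assumes "finite Q" "\<And>q. q \<in> Q \<Longrightarrow> laurent_expansion r n (F q) (c q)"
  shows "laurent_expansion r n (\<lambda>zs. \<Sum>q\<in>Q. F q zs) (\<lambda>m. \<Sum>q\<in>Q. c q m)"
  using assms
proof (induction Q rule: finite_induct)
  case empty
  then show ?case by (simp add: laurent_expansion_def)
next
  case (insert q Q)
  then show ?case using laurent_expansion_add[of r n "F q" "c q"] by simp
qed

lemma laurent_expansion_cong:
  "laurent_expansion r n F c \<Longrightarrow> (\<And>zs. zs \<in> torus r n \<Longrightarrow> F zs = G zs) \<Longrightarrow> laurent_expansion r n G c"
  unfolding laurent_expansion_def by auto

lemma laurent_expansion_one:
  "laurent_expansion r n (\<lambda>zs. 1) (\<lambda>m. if m = replicate n 0 then 1 else 0)"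
  unfolding laurent_expansion_def
proof
  fix zs assume "zs \<in> torus r n"
  have "((\<lambda>m. (if m = replicate n 0 then 1 else 0) * laurent_monomial m zs) has_sum 1) {replicate n 0}"
    using has_sum_finite[of "{replicate n 0}" "\<lambda>m. (if m = replicate n 0 then 1 else 0) * laurent_monomial m zs"]
    by (simp add: laurent_monomial_def)
  then show "((\<lambda>m. (if m = replicate n 0 then 1 else 0) * laurent_monomial m zs) has_sum 1) (exponent_lists n)"
    by (rule has_sum_cong_neutral[THEN iffD1, rotated -1]) (auto simp: exponent_lists_def)
qed

lemma laurent_norm_nonneg: "r \<ge> 0 \<Longrightarrow> laurent_norm r n c \<ge> 0"
  unfolding laurent_norm_def by (intro infsum_nonneg) (auto intro!: mult_nonneg_nonneg monomial_weight_nonneg)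

lemma laurent_norm_cmult: "laurent_norm r n (\<lambda>m. a * c m) = norm a * laurent_norm r n c"
  unfolding laurent_norm_def by (simp add: norm_mult mult.assoc infsum_cmult_right')

lemma laurent_norm_add_le:
  assumes "laurent_expansion r n F c" "laurent_expansion r n G d" "r \<ge> 0"
  shows "laurent_norm r n (\<lambda>m. c m + d m) \<le> laurent_norm r n c + laurent_norm r n d"
proof -
  note sc = laurent_expansion_abs_summable[OF assms(1,3)]
  note sd = laurent_expansion_abs_summable[OF assms(2,3)]
  have "laurent_norm r n (\<lambda>m. c m + d m) \<le>
          (\<Sum>\<^sub>\<infinity>m\<in>exponent_lists n. norm (c m) * monomial_weight r m + norm (d m) * monomial_weight r m)"
    unfolding laurent_norm_def
    by (rule infsum_mono[OF laurent_expansion_abs_summable[OF laurent_expansion_add[OF assms(1,2)] assms(3)]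
                             summable_on_add[OF sc sd]])
       (auto simp: distrib_right[symmetric] intro!: mult_right_mono norm_triangle_ineq monomial_weight_nonneg assms(3))
  also have "\<dots> = laurent_norm r n c + laurent_norm r n d"
    unfolding laurent_norm_def by (rule infsum_add[OF sc sd])
  finally show ?thesis .
qed

lemma laurent_norm_sum_le:
  assumes "finite Q" "\<And>q. q \<in> Q \<Longrightarrow> laurent_expansion r n (F q) (c q)" "r \<ge> 0"
  shows "laurent_norm r n (\<lambda>m. \<Sum>q\<in>Q. c q m) \<le> (\<Sum>q\<in>Q. laurent_norm r n (c q))"
  using assms(1,2)
proof (induction Q rule: finite_induct)
  case empty
  then show ?case by (simp add: laurent_norm_def)
next
  case (insert q Q)
  have "laurent_norm r n (\<lambda>m. \<Sum>q\<in>insert q Q. c q m) = laurent_norm r n (\<lambda>m. c q m + (\<Sum>q\<in>Q. c q m))"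
    using insert by simp
  also have "\<dots> \<le> laurent_norm r n (c q) + laurent_norm r n (\<lambda>m. \<Sum>q\<in>Q. c q m)"
    by (rule laurent_norm_add_le[OF _ laurent_expansion_sum[OF insert(1)] assms(3)]) (use insert in auto)
  finally show ?case using insert by simp
qed

text \<open>Termwise summation of expansions is allowed as soon as their norms are summable: the
  double family is then absolutely summable and both iterated sums can be taken.\<close>

lemma laurent_expansion_infsum:
  assumes expansions: "\<And>k. laurent_expansion r n (F k) (c k)" and r: "r > 0"
    and norms: "(\<lambda>k. laurent_norm r n (c k)) summable_on (UNIV :: nat set)"
  shows "laurent_expansion r n (\<lambda>zs. \<Sum>\<^sub>\<infinity>k. F k zs) (\<lambda>m. \<Sum>\<^sub>\<infinity>k. c k m)"
  unfolding laurent_expansion_def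
proof
  fix zs assume zs: "zs \<in> torus r n"
  define \<Phi> where "\<Phi> x = c (fst x) (snd x) * laurent_monomial (snd x) zs" for x :: "nat \<times> int list"
  have "(\<lambda>x. norm (c (fst x) (snd x)) * monomial_weight r (snd x)) summable_on UNIV \<times> exponent_lists n"
    unfolding Sigma_def[symmetric]
  proof (rule summable_on_SigmaI[where g = "\<lambda>k. laurent_norm r n (c k)"])
    show "((\<lambda>m. norm (c (fst (k, m)) (snd (k, m))) * monomial_weight r (snd (k, m))) has_sum
             laurent_norm r n (c k)) (exponent_lists n)" for k
      unfolding laurent_norm_def using laurent_expansion_abs_summable[OF expansions[of k]] r by simp
  qed (use norms r in \<open>auto intro!: mult_nonneg_nonneg monomial_weight_nonneg\<close>)
  then have "(\<lambda>x. norm (\<Phi> x)) summable_on UNIV \<times> exponent_lists n"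
    by (rule summable_on_cong[THEN iffD1, rotated])
       (use zs in \<open>auto simp: \<Phi>_def norm_mult norm_laurent_monomial exponent_lists_def\<close>)
  then have "\<Phi> summable_on UNIV \<times> exponent_lists n"
    by (rule abs_summable_summable)
  then have hs: "(\<Phi> has_sum (\<Sum>\<^sub>\<infinity>x\<in>UNIV \<times> exponent_lists n. \<Phi> x)) (UNIV \<times> exponent_lists n)"
    by simp
  have "((\<lambda>k. \<Sum>\<^sub>\<infinity>m\<in>exponent_lists n. \<Phi> (k, m)) has_sum (\<Sum>\<^sub>\<infinity>x\<in>UNIV \<times> exponent_lists n. \<Phi> x)) UNIV"
    by (rule has_sum_SigmaD_infsum[OF hs])
  moreover have "(\<Sum>\<^sub>\<infinity>m\<in>exponent_lists n. \<Phi> (k, m)) = F k zs" for k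
    using expansions[of k] zs unfolding laurent_expansion_def \<Phi>_def by (auto intro: infsumI)
  ultimately have total: "(\<Sum>\<^sub>\<infinity>k. F k zs) = (\<Sum>\<^sub>\<infinity>x\<in>UNIV \<times> exponent_lists n. \<Phi> x)"
    by (simp add: infsumI)
  have "((\<lambda>(m, k). \<Phi> (k, m)) has_sum (\<Sum>\<^sub>\<infinity>x\<in>UNIV \<times> exponent_lists n. \<Phi> x)) (exponent_lists n \<times> UNIV)"
    using hs by (rule has_sum_reindex_bij_witness[where i = "\<lambda>(m, k). (k, m)" and j = "\<lambda>(k, m). (m, k)",
                   THEN iffD1, rotated -1]) auto
  moreover have "(\<Sum>\<^sub>\<infinity>k. \<Phi> (k, m)) = (\<Sum>\<^sub>\<infinity>k. c k m) * laurent_monomial m zs" for m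
    unfolding \<Phi>_def by (simp add: infsum_cmult_left')
  ultimately show "((\<lambda>m. (\<Sum>\<^sub>\<infinity>k. c k m) * laurent_monomial m zs) has_sum (\<Sum>\<^sub>\<infinity>k. F k zs))
                     (exponent_lists n)"
    using has_sum_SigmaD_infsum unfolding total by fastforce
qed

lemma laurent_expansion_geometric:
  assumes c: "laurent_expansion r n F c" and i: "i < n" and r: "0 < r" "r < 1"
  shows "laurent_expansion r n (\<lambda>zs. 1 / (1 - zs ! i) * F zs)
           (\<lambda>m. \<Sum>\<^sub>\<infinity>k. c (m[i := m ! i - int k]))"
proof -
  define ck where "ck k m = c (m[i := m ! i - int k])" for k :: nat and m
  have expansions: "laurent_expansion r n (\<lambda>zs. zs ! i powi int k * F zs) (ck k)" for k
    unfolding ck_def by (rule laurent_expansion_shift[OF c i r(1)])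
  have "((\<lambda>k. laurent_norm r n c * r ^ k) has_sum (laurent_norm r n c * (1 / (1 - r)))) UNIV"
    using geometric_sums[of r] r laurent_norm_nonneg[of r n c]
    by (intro sums_nonneg_imp_has_sum sums_mult) auto
  moreover have "laurent_norm r n (ck k) = laurent_norm r n c * r ^ k" for k
    unfolding ck_def using laurent_norm_shift[OF i r(1), of c "int k"] by simp
  ultimately have "(\<lambda>k. laurent_norm r n (ck k)) summable_on UNIV"
    unfolding summable_on_def by auto
  from laurent_expansion_infsum[OF expansions r(1) this]
  show ?thesis unfolding ck_def
  proof (rule laurent_expansion_cong)
    fix zs assume "zs \<in> torus r n"
    then have "norm (zs ! i) < 1" using norm_nth_torus[OF _ i] r by auto
    then have "((\<lambda>k. zs ! i ^ k) has_sum (1 / (1 - zs ! i))) UNIV"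
      by (intro norm_summable_imp_has_sum geometric_sums)
         (auto simp: norm_power intro!: summable_geometric)
    from has_sum_cmult_left[OF this, of "F zs"]
    show "(\<Sum>\<^sub>\<infinity>k. zs ! i powi int k * F zs) = 1 / (1 - zs ! i) * F zs" by (simp add: infsumI)
  qed
qed

lemma laurent_monomial_permute_list:
  assumes "bij_betw \<sigma> {..<n} {..<n}" "length m = n" "length zs = n"
  shows "laurent_monomial (permute_list \<sigma> m) (permute_list \<sigma> zs) = laurent_monomial m zs"
proof -
  have "laurent_monomial (permute_list \<sigma> m) (permute_list \<sigma> zs) = (\<Prod>l<n. (\<lambda>l. zs ! l powi m ! l) (\<sigma> l))"
    unfolding laurent_monomial_def permute_list_def using assms by (intro prod.cong) auto
  also have "\<dots> = laurent_monomial m zs"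
    unfolding laurent_monomial_def using assms(2) by (subst prod.reindex_bij_betw[OF assms(1)]) simp
  finally show ?thesis .
qed

lemma permute_list_inv_into:
  assumes "bij_betw \<sigma> {..<n} {..<n}" "length xs = n"
  shows "permute_list (inv_into {..<n} \<sigma>) (permute_list \<sigma> xs) = xs"
    and "permute_list \<sigma> (permute_list (inv_into {..<n} \<sigma>) xs) = xs"
proof -
  have "inv_into {..<n} \<sigma> l < n" "\<sigma> l < n" if "l < n" for l
    using bij_betw_inv_into[OF assms(1)] assms(1) that bij_betwE by blast+
  with assms show "permute_list (inv_into {..<n} \<sigma>) (permute_list \<sigma> xs) = xs"
    and "permute_list \<sigma> (permute_list (inv_into {..<n} \<sigma>) xs) = xs"
    by (auto intro!: nth_equalityI simp: permute_list_def bij_betw_inv_into_right bij_betw_inv_into_left)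
qed

lemma permute_list_in_torus:
  "zs \<in> torus r n \<Longrightarrow> bij_betw \<sigma> {..<n} {..<n} \<Longrightarrow> permute_list \<sigma> zs \<in> torus r n"
  unfolding torus_def permute_list_def by (auto dest: bij_betwE)

lemma laurent_expansion_permute:
  assumes "laurent_expansion r n F c" and \<sigma>: "bij_betw \<sigma> {..<n} {..<n}"
  shows "laurent_expansion r n (\<lambda>zs. F (permute_list \<sigma> zs)) (\<lambda>m. c (permute_list \<sigma> m))"
  unfolding laurent_expansion_def
proof
  fix zs assume zs: "zs \<in> torus r n"
  let ?\<tau> = "inv_into {..<n} \<sigma>"
  have \<tau>: "bij_betw ?\<tau> {..<n} {..<n}" using bij_betw_inv_into[OF \<sigma>] .
  have \<sigma>\<tau>: "permute_list \<sigma> (permute_list ?\<tau> m) = m" if "length m = n" for m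
    using permute_list_inv_into(2)[OF \<sigma> that] .
  have "((\<lambda>m. c m * laurent_monomial m (permute_list \<sigma> zs)) has_sum F (permute_list \<sigma> zs)) (exponent_lists n)"
    using assms(1) permute_list_in_torus[OF zs \<sigma>] by (simp add: laurent_expansion_def)
  then show "((\<lambda>m. c (permute_list \<sigma> m) * laurent_monomial m zs) has_sum F (permute_list \<sigma> zs))
               (exponent_lists n)"
  proof (rule has_sum_reindex_bij_witness[where i = "permute_list \<sigma>" and j = "permute_list ?\<tau>",
            THEN iffD1, rotated -1])
    fix m assume "m \<in> exponent_lists n"
    then have m: "length m = n" by (simp add: exponent_lists_def)
    have "laurent_monomial (permute_list ?\<tau> m) zs =
            laurent_monomial (permute_list ?\<tau> m) (permute_list ?\<tau> (permute_list \<sigma> zs))"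
      by (simp only: permute_list_inv_into(1)[OF \<sigma> length_torus[OF zs]])
    also have "\<dots> = laurent_monomial m (permute_list \<sigma> zs)"
      by (rule laurent_monomial_permute_list[OF \<tau>]) (use m length_torus[OF zs] in auto)
    finally show "c (permute_list \<sigma> (permute_list ?\<tau> m)) * laurent_monomial (permute_list ?\<tau> m) zs =
                    c m * laurent_monomial m (permute_list \<sigma> zs)"
      using \<sigma>\<tau>[OF m] by simp
  qed (use \<sigma>\<tau> permute_list_inv_into(1)[OF \<sigma>] in \<open>auto simp: exponent_lists_def\<close>)
qed

lemma circ_ints_cong:
  assumes "r \<ge> 0" "\<And>zs. zs \<in> torus r n \<Longrightarrow> F zs = G zs"
  shows "circ_ints r n F = circ_ints r n G"
  using assms(2)
proof (induction n arbitrary: F G)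
  case 0
  then show ?case by simp
next
  case (Suc n)
  have "circ_ints r n (\<lambda>zs. F (of_real r * exp (\<i> * of_real \<theta>) # zs)) =
        circ_ints r n (\<lambda>zs. G (of_real r * exp (\<i> * of_real \<theta>) # zs))" for \<theta>
    by (rule Suc.IH) (use Suc.prems assms(1) in \<open>auto simp: norm_mult\<close>)
  then show ?case by simp
qed

lemma circ_ints_cmult: "circ_ints r n (\<lambda>zs. a * F zs) = a * circ_ints r n F"
proof (induction n arbitrary: F)
  case 0
  then show ?case by simp
next
  case (Suc n)
  then show ?case by (simp only: circ_ints.simps(2) mult.assoc integral_mult_right)
qed

lemma circ_ints_Suc_append:
  "circ_ints r (Suc n) F = circ_ints r n (\<lambda>zs. circ_ints r 1 (\<lambda>ws. F (zs @ ws)))"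
proof (induction n arbitrary: F)
  case 0
  then show ?case by simp
next
  case (Suc n)
  let ?g = "\<lambda>\<theta>::real. of_real r * exp (\<i> * of_real \<theta>)"
  let ?d = "\<lambda>\<theta>::real. \<i> * of_real r * exp (\<i> * of_real \<theta>)"
  have 1: "circ_ints r (Suc (Suc n)) F =
             integral {0..2*pi} (\<lambda>\<theta>. circ_ints r (Suc n) (\<lambda>zs. F (?g \<theta> # zs)) * ?d \<theta>)"
    by (rule circ_ints.simps(2))
  have 2: "integral {0..2*pi} (\<lambda>\<theta>. circ_ints r (Suc n) (\<lambda>zs. F (?g \<theta> # zs)) * ?d \<theta>) =
             integral {0..2*pi} (\<lambda>\<theta>. circ_ints r n (\<lambda>zs. circ_ints r 1 (\<lambda>ws. F (?g \<theta> # zs @ ws))) * ?d \<theta>)"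
    using Suc.IH by presburger
  have 3: "circ_ints r (Suc n) (\<lambda>zs. circ_ints r 1 (\<lambda>ws. F (zs @ ws))) =
             integral {0..2*pi} (\<lambda>\<theta>. circ_ints r n (\<lambda>zs. circ_ints r 1 (\<lambda>ws. F (?g \<theta> # zs @ ws))) * ?d \<theta>)"
    using circ_ints.simps(2)[of r n "\<lambda>zs. circ_ints r 1 (\<lambda>ws. F (zs @ ws))"] by simp
  show ?case using 1 2 3 by simp
qed

declare circ_ints.simps(2) [simp del]

lemma circ_ints_infsum:
  assumes "\<And>k. laurent_expansion r n (F k) (c k)" "r > 0"
    and "(\<lambda>k. laurent_norm r n (c k)) summable_on (UNIV :: nat set)"
  shows "circ_ints r n (\<lambda>zs. \<Sum>\<^sub>\<infinity>k. F k zs) = (\<Sum>\<^sub>\<infinity>k. circ_ints r n (F k))"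
proof -
  have "circ_ints r n (\<lambda>zs. \<Sum>\<^sub>\<infinity>k. F k zs) = (2 * of_real pi * \<i>) ^ n * (\<Sum>\<^sub>\<infinity>k. c k (replicate n (-1)))"
    by (rule circ_ints_laurent_expansion[OF laurent_expansion_infsum[OF assms] assms(2)])
  also have "\<dots> = (\<Sum>\<^sub>\<infinity>k. (2 * of_real pi * \<i>) ^ n * c k (replicate n (-1)))"
    by (rule infsum_cmult_right'[symmetric])
  also have "\<dots> = (\<Sum>\<^sub>\<infinity>k. circ_ints r n (F k))"
    by (simp only: circ_ints_laurent_expansion[OF assms(1,2)])
  finally show ?thesis .
qed

section \<open>Laurent expansions with restricted support\<close>

text \<open>The support set \<open>S\<close> serves to certify that a coefficient, such as that of
  \<open>\<xi>\<^sub>1\<^sup>-\<^sup>1 \<cdots> \<xi>\<^sub>n\<^sup>-\<^sup>1\<close>, vanishes.\<close>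

definition has_laurent_in :: "int list set \<Rightarrow> real \<Rightarrow> nat \<Rightarrow> (complex list \<Rightarrow> complex) \<Rightarrow> bool" where
  "has_laurent_in S r n F \<longleftrightarrow> (\<exists>c. laurent_expansion r n F c \<and> (\<forall>m. m \<notin> S \<longrightarrow> c m = 0))"

abbreviation has_laurent :: "real \<Rightarrow> nat \<Rightarrow> (complex list \<Rightarrow> complex) \<Rightarrow> bool" where
  "has_laurent \<equiv> has_laurent_in UNIV"

definition laurent_multiplier :: "int list set \<Rightarrow> real \<Rightarrow> nat \<Rightarrow> (complex list \<Rightarrow> complex) \<Rightarrow> bool" where
  "laurent_multiplier S r n h \<longleftrightarrow>
     (\<forall>F. has_laurent_in S r n F \<longrightarrow> has_laurent_in S r n (\<lambda>zs. h zs * F zs))"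

lemma has_laurent_in_add:
  assumes "has_laurent_in S r n F" "has_laurent_in S r n G"
  shows "has_laurent_in S r n (\<lambda>zs. F zs + G zs)"
proof -
  obtain c d where "laurent_expansion r n F c" "laurent_expansion r n G d"
    and "\<forall>m. m \<notin> S \<longrightarrow> c m = 0" "\<forall>m. m \<notin> S \<longrightarrow> d m = 0"
    using assms unfolding has_laurent_in_def by blast
  then show ?thesis
    unfolding has_laurent_in_def by (intro exI[of _ "\<lambda>m. c m + d m"]) (simp add: laurent_expansion_add)
qed

lemma has_laurent_in_cmult:
  assumes "has_laurent_in S r n F"
  shows "has_laurent_in S r n (\<lambda>zs. a * F zs)"
proof -
  obtain c where "laurent_expansion r n F c" "\<forall>m. m \<notin> S \<longrightarrow> c m = 0"
    using assms unfolding has_laurent_in_def by blast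
  then show ?thesis
    unfolding has_laurent_in_def by (intro exI[of _ "\<lambda>m. a * c m"]) (simp add: laurent_expansion_cmult)
qed

lemma has_laurent_sum:
  assumes "finite Q" "\<And>q. q \<in> Q \<Longrightarrow> has_laurent r n (F q)"
  shows "has_laurent r n (\<lambda>zs. \<Sum>q\<in>Q. F q zs)"
proof -
  from assms(2) have "\<forall>q\<in>Q. \<exists>c. laurent_expansion r n (F q) c"
    unfolding has_laurent_in_def by blast
  then obtain c where "\<forall>q\<in>Q. laurent_expansion r n (F q) (c q)"
    by (metis bchoice)
  then have "laurent_expansion r n (\<lambda>zs. \<Sum>q\<in>Q. F q zs) (\<lambda>m. \<Sum>q\<in>Q. c q m)"
    by (intro laurent_expansion_sum[OF assms(1)]) auto
  then show ?thesis
    unfolding has_laurent_in_def by blast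
qed

lemma laurent_multiplier_imp_has_laurent_in:
  assumes "laurent_multiplier S r n h" "replicate n 0 \<in> S"
  shows "has_laurent_in S r n h"
proof -
  have "has_laurent_in S r n (\<lambda>zs. 1)"
    unfolding has_laurent_in_def using laurent_expansion_one assms(2)
    by (intro exI[of _ "\<lambda>m. if m = replicate n 0 then 1 else 0"]) auto
  with assms(1) have "has_laurent_in S r n (\<lambda>zs. h zs * 1)"
    unfolding laurent_multiplier_def by blast
  then show ?thesis by simp
qed

lemma laurent_multiplier_const: "laurent_multiplier S r n (\<lambda>zs. a)"
  unfolding laurent_multiplier_def using has_laurent_in_cmult by blast

lemma laurent_multiplier_add:
  assumes "laurent_multiplier S r n h" "laurent_multiplier S r n g"
  shows "laurent_multiplier S r n (\<lambda>zs. h zs + g zs)"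
  unfolding laurent_multiplier_def
proof (intro allI impI)
  fix F assume "has_laurent_in S r n F"
  with assms have "has_laurent_in S r n (\<lambda>zs. h zs * F zs + g zs * F zs)"
    unfolding laurent_multiplier_def by (intro has_laurent_in_add) auto
  then show "has_laurent_in S r n (\<lambda>zs. (h zs + g zs) * F zs)"
    by (simp add: distrib_right)
qed

lemma laurent_multiplier_mult:
  "laurent_multiplier S r n h \<Longrightarrow> laurent_multiplier S r n g \<Longrightarrow> laurent_multiplier S r n (\<lambda>zs. h zs * g zs)"
  unfolding laurent_multiplier_def by (simp add: mult.assoc)

lemma laurent_multiplier_diff:
  "laurent_multiplier S r n h \<Longrightarrow> laurent_multiplier S r n g \<Longrightarrow> laurent_multiplier S r n (\<lambda>zs. h zs - g zs)"
  using laurent_multiplier_add[of S r n h "\<lambda>zs. (-1) * g zs"]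
    laurent_multiplier_mult[OF laurent_multiplier_const[of S r n "-1"], of g]
  by simp

lemma laurent_multiplier_prod:
  "finite Q \<Longrightarrow> (\<And>q. q \<in> Q \<Longrightarrow> laurent_multiplier S r n (h q)) \<Longrightarrow>
     laurent_multiplier S r n (\<lambda>zs. \<Prod>q\<in>Q. h q zs)"
proof (induction Q rule: finite_induct)
  case empty
  then show ?case using laurent_multiplier_const[of S r n 1] by simp
next
  case (insert q Q)
  then show ?case using laurent_multiplier_mult[of S r n "h q" "\<lambda>zs. \<Prod>q\<in>Q. h q zs"] by simp
qed

lemma laurent_multiplier_sum:
  "finite Q \<Longrightarrow> (\<And>q. q \<in> Q \<Longrightarrow> laurent_multiplier S r n (h q)) \<Longrightarrow>
     laurent_multiplier S r n (\<lambda>zs. \<Sum>q\<in>Q. h q zs)"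
proof (induction Q rule: finite_induct)
  case empty
  then show ?case using laurent_multiplier_const[of S r n 0] by simp
next
  case (insert q Q)
  then show ?case using laurent_multiplier_add[of S r n "h q" "\<lambda>zs. \<Sum>q\<in>Q. h q zs"] by simp
qed

lemma shifted_coeff_vanishes:
  fixes m :: "int list"
  assumes "\<forall>m. m \<notin> S \<longrightarrow> c m = 0" "\<forall>m\<in>S. m[i := m ! i + p] \<in> S" "m \<notin> S"
  shows "c (m[i := m ! i - p]) = 0"
proof -
  have "(m[i := m ! i - p])[i := m[i := m ! i - p] ! i + p] = m"
    by (cases "i < length m") (auto simp: list_update_beyond)
  then have "m[i := m ! i - p] \<notin> S"
    using assms(2,3) by force
  then show ?thesis using assms(1) by blast
qed

lemma laurent_multiplier_powi:
  assumes "i < n" "r > 0" "\<forall>m\<in>S. m[i := m ! i + p] \<in> S"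
  shows "laurent_multiplier S r n (\<lambda>zs. zs ! i powi p)"
  unfolding laurent_multiplier_def has_laurent_in_def
proof (intro allI impI, elim exE conjE)
  fix F c assume "laurent_expansion r n F c" and c: "\<forall>m. m \<notin> S \<longrightarrow> c m = 0"
  with laurent_expansion_shift[OF _ assms(1,2)] shifted_coeff_vanishes[OF c assms(3)]
  show "\<exists>d. laurent_expansion r n (\<lambda>zs. zs ! i powi p * F zs) d \<and> (\<forall>m. m \<notin> S \<longrightarrow> d m = 0)"
    by blast
qed

lemma laurent_multiplier_geometric:
  assumes "i < n" "0 < r" "r < 1" "\<forall>m\<in>S. \<forall>k::nat. m[i := m ! i + int k] \<in> S"
  shows "laurent_multiplier S r n (\<lambda>zs. 1 / (1 - zs ! i))"
  unfolding laurent_multiplier_def has_laurent_in_def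
proof (intro allI impI, elim exE conjE)
  fix F c assume "laurent_expansion r n F c" and c: "\<forall>m. m \<notin> S \<longrightarrow> c m = 0"
  moreover have "(\<Sum>\<^sub>\<infinity>k. c (m[i := m ! i - int k])) = 0" if "m \<notin> S" for m
    using shifted_coeff_vanishes[OF c _ that] assms(4) by simp
  ultimately show "\<exists>d. laurent_expansion r n (\<lambda>zs. 1 / (1 - zs ! i) * F zs) d \<and> (\<forall>m. m \<notin> S \<longrightarrow> d m = 0)"
    using laurent_expansion_geometric[OF _ assms(1-3)] by blast
qed

lemma circ_ints_add:
  assumes "has_laurent r n F" "has_laurent r n G" "r > 0"
  shows "circ_ints r n (\<lambda>zs. F zs + G zs) = circ_ints r n F + circ_ints r n G"
proof -
  obtain c d where "laurent_expansion r n F c" "laurent_expansion r n G d"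
    using assms(1,2) unfolding has_laurent_in_def by blast
  then show ?thesis
    using circ_ints_laurent_expansion[OF laurent_expansion_add assms(3)] circ_ints_laurent_expansion assms(3)
    by (simp add: distrib_left)
qed

lemma circ_ints_sum:
  assumes "finite Q" "\<And>q. q \<in> Q \<Longrightarrow> has_laurent r n (F q)" "r > 0"
  shows "circ_ints r n (\<lambda>zs. \<Sum>q\<in>Q. F q zs) = (\<Sum>q\<in>Q. circ_ints r n (F q))"
  using assms(1,2)
proof (induction Q rule: finite_induct)
  case empty
  then show ?case using circ_ints_cmult[of r n 0 "\<lambda>_. 0"] by simp
next
  case (insert q Q)
  have "circ_ints r n (\<lambda>zs. \<Sum>q\<in>insert q Q. F q zs) = circ_ints r n (\<lambda>zs. F q zs + (\<Sum>q\<in>Q. F q zs))"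
    using insert by simp
  also have "\<dots> = circ_ints r n (F q) + circ_ints r n (\<lambda>zs. \<Sum>q\<in>Q. F q zs)"
    by (rule circ_ints_add) (use insert assms(3) in \<open>auto intro: has_laurent_sum\<close>)
  finally show ?case using insert by simp
qed

lemma circ_ints_eq_0_if_has_laurent_in:
  assumes "has_laurent_in S r n F" "replicate n (-1) \<notin> S" "r > 0"
  shows "circ_ints r n F = 0"
  using assms circ_ints_laurent_expansion unfolding has_laurent_in_def by force

lemma circ_ints_permute:
  assumes "has_laurent r n F" "bij_betw \<sigma> {..<n} {..<n}" "r > 0"
  shows "circ_ints r n (\<lambda>zs. F (permute_list \<sigma> zs)) = circ_ints r n F"
proof -
  obtain c where "laurent_expansion r n F c" using assms(1) unfolding has_laurent_in_def by blast
  moreover have "permute_list \<sigma> (replicate n (-1)) = replicate n (-1::int)"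
    using assms(2) by (intro nth_equalityI) (auto simp: permute_list_def dest: bij_betwE)
  ultimately show ?thesis
    using circ_ints_laurent_expansion[OF laurent_expansion_permute[OF _ assms(2)] assms(3)]
      circ_ints_laurent_expansion[OF _ assms(3)]
    by simp
qed

lemma circ_ints_antisymmetric:
  assumes "has_laurent r n W" "bij_betw \<sigma> {..<n} {..<n}" "r > 0"
    and "\<And>zs. zs \<in> torus r n \<Longrightarrow> W (permute_list \<sigma> zs) = - W zs"
  shows "circ_ints r n W = 0"
proof -
  have "circ_ints r n W = circ_ints r n (\<lambda>zs. W (permute_list \<sigma> zs))"
    using circ_ints_permute[OF assms(1-3)] by simp
  also have "\<dots> = circ_ints r n (\<lambda>zs. (-1) * W zs)"
    by (rule circ_ints_cong) (use assms in auto)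
  also have "\<dots> = - circ_ints r n W"
    using circ_ints_cmult[of r n "-1" W] by simp
  finally show ?thesis by simp
qed

section \<open>The kernel of the contour integral formula\<close>

text \<open>With \<open>a\<^sub>i = x - y\<^sub>i - 1\<close> the integrand of the theorem is
  \<open>e\<^sup>-\<^sup>N\<^sup>t \<cdot> tasep_kernel N k a \<xi> \<cdot> exp (t \<cdot> inv_sum N \<xi>)\<close>.\<close>

definition first_class_factor :: "nat \<Rightarrow> complex list \<Rightarrow> complex" where
  "first_class_factor k zs = (\<Prod>i<k. 1 - zs ! i)"

definition interaction_factor :: "nat \<Rightarrow> complex list \<Rightarrow> complex" where
  "interaction_factor N zs = (\<Prod>j<N. \<Prod>i<j. (zs ! j - zs ! i) / (1 - zs ! i))"

definition pole_factor :: "nat \<Rightarrow> complex list \<Rightarrow> complex" where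
  "pole_factor N zs = (\<Prod>i<N. 1 / (1 - zs ! i))"

definition power_factor :: "nat \<Rightarrow> int list \<Rightarrow> complex list \<Rightarrow> complex" where
  "power_factor N a zs = (\<Prod>i<N. zs ! i powi a ! i)"

definition tasep_kernel :: "nat \<Rightarrow> nat \<Rightarrow> int list \<Rightarrow> complex list \<Rightarrow> complex" where
  "tasep_kernel N k a zs = first_class_factor k zs * interaction_factor N zs * pole_factor N zs * power_factor N a zs"

definition inv_sum :: "nat \<Rightarrow> complex list \<Rightarrow> complex" where
  "inv_sum N zs = (\<Sum>i<N. zs ! i powi (-1))"

lemma laurent_multiplier_nth:
  "j < n \<Longrightarrow> r > 0 \<Longrightarrow> \<forall>m\<in>S. m[j := m ! j + 1] \<in> S \<Longrightarrow> laurent_multiplier S r n (\<lambda>zs. zs ! j)"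
  using laurent_multiplier_powi[of j n r S 1] by simp

lemma laurent_multiplier_tasep_kernel:
  assumes "k \<le> N" "0 < r" "r < 1"
    and up: "\<forall>m\<in>S. \<forall>i<N. \<forall>p::nat. m[i := m ! i + int p] \<in> S"
    and exps: "\<forall>m\<in>S. \<forall>i<N. m[i := m ! i + a ! i] \<in> S"
  shows "laurent_multiplier S r N (tasep_kernel N k a)"
proof -
  have nth: "laurent_multiplier S r N (\<lambda>zs. zs ! j)" if "j < N" for j
    by (rule laurent_multiplier_nth) (use that assms(2) up[rule_format, of _ j 1] in auto)
  have geom: "laurent_multiplier S r N (\<lambda>zs. 1 / (1 - zs ! i))" if "i < N" for i
    by (rule laurent_multiplier_geometric) (use that assms(2,3) up in auto)
  have "laurent_multiplier S r N (first_class_factor k)"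
    unfolding first_class_factor_def
    by (rule laurent_multiplier_prod) (use assms(1) in \<open>auto intro!: laurent_multiplier_diff laurent_multiplier_const nth\<close>)
  moreover have "laurent_multiplier S r N (interaction_factor N)"
    unfolding interaction_factor_def
  proof (intro laurent_multiplier_prod)
    fix j i assume "j \<in> {..<N}" "i \<in> {..<j}"
    then have "laurent_multiplier S r N (\<lambda>zs. (zs ! j - zs ! i) * (1 / (1 - zs ! i)))"
      by (intro laurent_multiplier_mult laurent_multiplier_diff nth geom) auto
    then show "laurent_multiplier S r N (\<lambda>zs. (zs ! j - zs ! i) / (1 - zs ! i))" by simp
  qed auto
  moreover have "laurent_multiplier S r N (pole_factor N)"
    unfolding pole_factor_def by (rule laurent_multiplier_prod) (auto intro: geom)
  moreover have "laurent_multiplier S r N (power_factor N a)"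
    unfolding power_factor_def
    by (rule laurent_multiplier_prod) (use assms(2) exps in \<open>auto intro!: laurent_multiplier_powi\<close>)
  ultimately show ?thesis
    unfolding tasep_kernel_def[abs_def] by (intro laurent_multiplier_mult)
qed

lemma laurent_multiplier_tasep_kernel_UNIV:
  "k \<le> N \<Longrightarrow> 0 < r \<Longrightarrow> r < 1 \<Longrightarrow> laurent_multiplier UNIV r N (tasep_kernel N k a)"
  by (rule laurent_multiplier_tasep_kernel) auto

lemma laurent_multiplier_inv_sum_power: "r > 0 \<Longrightarrow> laurent_multiplier UNIV r N (\<lambda>zs. inv_sum N zs ^ n)"
proof (induction n)
  case 0
  then show ?case using laurent_multiplier_const[of UNIV r N 1] by simp
next
  case (Suc n)
  have "laurent_multiplier UNIV r N (inv_sum N)"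
    unfolding inv_sum_def using Suc.prems by (intro laurent_multiplier_sum laurent_multiplier_powi) auto
  with Suc show ?case using laurent_multiplier_mult by fastforce
qed

lemma has_laurent_kernel_inv_sum_power:
  assumes "laurent_multiplier UNIV r N g" "k \<le> N" "0 < r" "r < 1"
  shows "has_laurent r N (\<lambda>zs. g zs * tasep_kernel N k a zs * inv_sum N zs ^ n)"
  using assms
  by (intro laurent_multiplier_imp_has_laurent_in laurent_multiplier_mult laurent_multiplier_tasep_kernel_UNIV
        laurent_multiplier_inv_sum_power) auto

text \<open>Multiplying by \<open>inv_sum\<close> raises by one, in turn, each exponent of the coefficient index; its
  effect on the norm is the factor \<open>N / r\<close> of the exponential series bound.\<close>

definition inv_sum_coeffs :: "nat \<Rightarrow> (int list \<Rightarrow> complex) \<Rightarrow> int list \<Rightarrow> complex" where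
  "inv_sum_coeffs N c m = (\<Sum>i<N. c (m[i := m ! i + 1]))"

lemma laurent_expansion_inv_sum:
  assumes "laurent_expansion r N F c" "r > 0"
  shows "laurent_expansion r N (\<lambda>zs. inv_sum N zs * F zs) (inv_sum_coeffs N c)"
    and "laurent_norm r N (inv_sum_coeffs N c) \<le> (real N / r) * laurent_norm r N c"
proof -
  have shift: "laurent_expansion r N (\<lambda>zs. zs ! i powi (-1) * F zs) (\<lambda>m. c (m[i := m ! i + 1]))"
    if "i \<in> {..<N}" for i
    using laurent_expansion_shift[OF assms(1) _ assms(2), of i "-1"] that by simp
  have "laurent_expansion r N (\<lambda>zs. \<Sum>i<N. zs ! i powi (-1) * F zs) (inv_sum_coeffs N c)"
    unfolding inv_sum_coeffs_def by (rule laurent_expansion_sum) (use shift in auto)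
  then show "laurent_expansion r N (\<lambda>zs. inv_sum N zs * F zs) (inv_sum_coeffs N c)"
    by (rule laurent_expansion_cong) (simp add: inv_sum_def sum_distrib_right)
  have "laurent_norm r N (inv_sum_coeffs N c) \<le> (\<Sum>i<N. laurent_norm r N (\<lambda>m. c (m[i := m ! i + 1])))"
    unfolding inv_sum_coeffs_def by (rule laurent_norm_sum_le) (use assms shift in auto)
  also have "\<dots> = (\<Sum>i<N. r powi (-1) * laurent_norm r N c)"
    using laurent_norm_shift[OF _ assms(2), of _ N c "-1"] by (intro sum.cong) auto
  also have "\<dots> = (real N / r) * laurent_norm r N c"
    by (simp add: power_int_minus divide_inverse)
  finally show "laurent_norm r N (inv_sum_coeffs N c) \<le> (real N / r) * laurent_norm r N c" .
qed

lemma laurent_expansion_inv_sum_power: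
  assumes "laurent_expansion r N F c" "r > 0"
  shows "laurent_expansion r N (\<lambda>zs. inv_sum N zs ^ n * F zs) ((inv_sum_coeffs N ^^ n) c)
       \<and> laurent_norm r N ((inv_sum_coeffs N ^^ n) c) \<le> (real N / r) ^ n * laurent_norm r N c"
proof (induction n)
  case 0
  then show ?case using assms by simp
next
  case (Suc n)
  then have "laurent_expansion r N (\<lambda>zs. inv_sum N zs ^ n * F zs) ((inv_sum_coeffs N ^^ n) c)" by blast
  from laurent_expansion_inv_sum[OF this assms(2)]
  have "laurent_expansion r N (\<lambda>zs. inv_sum N zs ^ Suc n * F zs) ((inv_sum_coeffs N ^^ Suc n) c)"
    "laurent_norm r N ((inv_sum_coeffs N ^^ Suc n) c) \<le> (real N / r) * laurent_norm r N ((inv_sum_coeffs N ^^ n) c)"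
    by (simp_all add: mult.assoc)
  moreover have "(real N / r) * laurent_norm r N ((inv_sum_coeffs N ^^ n) c) \<le>
                   (real N / r) * ((real N / r) ^ n * laurent_norm r N c)"
    using Suc assms(2) by (intro mult_left_mono) auto
  ultimately show ?case by (auto simp: mult.assoc)
qed

section \<open>Antisymmetry under adjacent transpositions\<close>

abbreviation adjacent_swap :: "nat \<Rightarrow> nat \<Rightarrow> nat" where
  "adjacent_swap i \<equiv> Transposition.transpose i (Suc i)"

lemma bij_betw_adjacent_swap: "Suc i < k \<or> k \<le> i \<Longrightarrow> bij_betw (adjacent_swap i) {..<k} {..<k}"
  by (rule bij_betw_byWitness[where f' = "adjacent_swap i"]) (auto simp: Transposition.transpose_def)

lemma prod_permute_adjacent_swap:
  assumes "Suc i < K \<or> K \<le> i" "K \<le> length zs"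
  shows "(\<Prod>l<K. f (permute_list (adjacent_swap i) zs ! l) l) = (\<Prod>l<K. f (zs ! l) (adjacent_swap i l))"
proof -
  have "(\<Prod>l<K. f (permute_list (adjacent_swap i) zs ! l) l) =
          (\<Prod>l<K. (\<lambda>l. f (zs ! l) (adjacent_swap i l)) (adjacent_swap i l))"
    using assms by (intro prod.cong) (auto simp: permute_list_def Transposition.transpose_def)
  also have "\<dots> = (\<Prod>l<K. f (zs ! l) (adjacent_swap i l))"
    by (rule prod.reindex_bij_betw[OF bij_betw_adjacent_swap[OF assms(1)]])
  finally show ?thesis .
qed

lemma inv_sum_permute_adjacent_swap:
  assumes "Suc i < N" "length zs = N"
  shows "inv_sum N (permute_list (adjacent_swap i) zs) = inv_sum N zs"
proof -
  have "(\<Sum>l<N. permute_list (adjacent_swap i) zs ! l powi (-1)) = (\<Sum>l<N. (\<lambda>l. zs ! l powi (-1)) (adjacent_swap i l))"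
    using assms by (intro sum.cong) (auto simp: permute_list_def Transposition.transpose_def)
  also have "\<dots> = (\<Sum>l<N. zs ! l powi (-1))"
    by (rule sum.reindex_bij_betw[OF bij_betw_adjacent_swap]) (use assms in auto)
  finally show ?thesis unfolding inv_sum_def .
qed

lemma pole_factor_permute_adjacent_swap:
  "Suc i < N \<Longrightarrow> length zs = N \<Longrightarrow> pole_factor N (permute_list (adjacent_swap i) zs) = pole_factor N zs"
  unfolding pole_factor_def using prod_permute_adjacent_swap[of i N zs "\<lambda>z l. 1 / (1 - z)"] by simp

lemma power_factor_permute_adjacent_swap:
  assumes "Suc i < N" "length zs = N" "length a = N" "a ! i = a ! Suc i"
  shows "power_factor N a (permute_list (adjacent_swap i) zs) = power_factor N a zs"
proof -
  have "power_factor N a (permute_list (adjacent_swap i) zs) = (\<Prod>l<N. zs ! l powi a ! adjacent_swap i l)"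
    unfolding power_factor_def using prod_permute_adjacent_swap[of i N zs "\<lambda>z l. z powi a ! l"] assms by simp
  also have "\<dots> = power_factor N a zs"
    unfolding power_factor_def using assms by (intro prod.cong) (auto simp: Transposition.transpose_def)
  finally show ?thesis .
qed

lemma first_class_factor_permute_adjacent_swap:
  assumes "Suc i \<noteq> k" "k \<le> length zs"
  shows "first_class_factor k (permute_list (adjacent_swap i) zs) = first_class_factor k zs"
proof -
  have "Suc i < k \<or> k \<le> i" using assms(1) by linarith
  then show ?thesis
    unfolding first_class_factor_def using prod_permute_adjacent_swap[of i k zs "\<lambda>z l. 1 - z"] assms(2) by simp
qed

lemma first_class_factor_permute_adjacent_swap_edge:
  assumes "Suc i < length zs"
  shows "first_class_factor (Suc i) (permute_list (adjacent_swap i) zs) * (1 - zs ! i) =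
           first_class_factor (Suc i) zs * (1 - zs ! Suc i)"
proof -
  have "first_class_factor i (permute_list (adjacent_swap i) zs) = first_class_factor i zs"
    unfolding first_class_factor_def using assms
    by (intro prod.cong) (auto simp: permute_list_def Transposition.transpose_def)
  moreover have "permute_list (adjacent_swap i) zs ! i = zs ! Suc i"
    using assms by (simp add: permute_list_def)
  ultimately show ?thesis unfolding first_class_factor_def by (simp add: mult_ac)
qed

text \<open>Swapping \<open>\<xi>\<^sub>i\<close> and \<open>\<xi>\<^sub>i\<^sub>+\<^sub>1\<close> permutes all factors of \<open>interaction_factor\<close> except
  the one for the pair \<open>(i, i+1)\<close> itself, which changes into minus its reflection.\<close>

lemma interaction_factor_permute_adjacent_swap:
  assumes "Suc i < N" and lz: "length zs = N" and ne: "\<forall>l<N. zs ! l \<noteq> 1"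
  shows "(1 - zs ! Suc i) * interaction_factor N (permute_list (adjacent_swap i) zs) =
           - ((1 - zs ! i) * interaction_factor N zs)"
proof -
  let ?zs' = "permute_list (adjacent_swap i) zs"
  define P where "P = Sigma {..<N} (\<lambda>j. {..<j})"
  define q where "q z p = (z ! fst p - z ! snd p) / (1 - z ! snd p)" for z :: "complex list" and p :: "nat \<times> nat"
  define p0 where "p0 = (Suc i, i)"
  define P' where "P' = P - {p0}"
  have Q: "interaction_factor N z = (\<Prod>p\<in>P. q z p)" for z
    unfolding interaction_factor_def P_def q_def by (subst prod.Sigma) (auto simp: case_prod_beta)
  have "finite P" "p0 \<in> P" unfolding P_def p0_def using assms(1) by auto
  then have split: "(\<Prod>p\<in>P. f p) = f p0 * (\<Prod>p\<in>P'. f p)" for f :: "nat \<times> nat \<Rightarrow> complex"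
    unfolding P'_def by (rule prod.remove)
  define \<phi> where "\<phi> p = (adjacent_swap i (fst p), adjacent_swap i (snd p))" for p
  have "\<phi> p \<in> P'" if "p \<in> P'" for p
    using that assms(1) unfolding \<phi>_def P'_def P_def p0_def
    by (cases p) (auto simp: Transposition.transpose_def)
  then have \<phi>: "bij_betw \<phi> P' P'"
    by (intro bij_betw_byWitness[where f' = \<phi>]) (auto simp: \<phi>_def)
  have "(\<Prod>p\<in>P'. q ?zs' p) = (\<Prod>p\<in>P'. q zs (\<phi> p))"
    using lz by (intro prod.cong) (auto simp: q_def \<phi>_def P'_def P_def permute_list_def)
  also have "\<dots> = (\<Prod>p\<in>P'. q zs p)"
    by (rule prod.reindex_bij_betw[OF \<phi>])
  finally have rest: "(\<Prod>p\<in>P'. q ?zs' p) = (\<Prod>p\<in>P'. q zs p)" .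
  have q0: "q ?zs' p0 = (zs ! i - zs ! Suc i) / (1 - zs ! Suc i)" "q zs p0 = (zs ! Suc i - zs ! i) / (1 - zs ! i)"
    unfolding q_def p0_def using assms(1) lz by (auto simp: permute_list_def)
  have "1 - zs ! i \<noteq> 0" "1 - zs ! Suc i \<noteq> 0" using ne assms(1) by auto
  then show ?thesis
    unfolding Q split[of "q ?zs'"] split[of "q zs"] rest q0 by (simp add: field_simps)
qed

lemma tasep_kernel_permute_adjacent_swap:
  assumes "Suc i < N" "length zs = N" "\<forall>l<N. zs ! l \<noteq> 1" "length a = N" "a ! i = a ! Suc i"
  defines "zs' \<equiv> permute_list (adjacent_swap i) zs"
  shows "Suc i \<noteq> k \<Longrightarrow> k \<le> N \<Longrightarrow> (1 - zs' ! i) * tasep_kernel N k a zs' = - ((1 - zs ! i) * tasep_kernel N k a zs)"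
    and "tasep_kernel N (Suc i) a zs' = - tasep_kernel N (Suc i) a zs"
proof -
  note Q = interaction_factor_permute_adjacent_swap[OF assms(1-3), folded zs'_def]
  have same: "pole_factor N zs' = pole_factor N zs" "power_factor N a zs' = power_factor N a zs"
    unfolding zs'_def using assms
    by (simp_all add: pole_factor_permute_adjacent_swap power_factor_permute_adjacent_swap)
  have "zs' ! i = zs ! Suc i" unfolding zs'_def using assms(1,2) by (simp add: permute_list_def)
  moreover assume "Suc i \<noteq> k" "k \<le> N"
  then have "first_class_factor k zs' = first_class_factor k zs"
    unfolding zs'_def using assms(1,2) by (simp add: first_class_factor_permute_adjacent_swap)
  ultimately have "(1 - zs' ! i) * tasep_kernel N k a zs' =
      first_class_factor k zs * ((1 - zs ! Suc i) * interaction_factor N zs') * pole_factor N zs * power_factor N a zs"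
    unfolding tasep_kernel_def same by (simp add: mult_ac)
  also have "\<dots> = - ((1 - zs ! i) * tasep_kernel N k a zs)"
    unfolding Q tasep_kernel_def by (simp add: mult_ac)
  finally show "(1 - zs' ! i) * tasep_kernel N k a zs' = - ((1 - zs ! i) * tasep_kernel N k a zs)" .
next
  note Q = interaction_factor_permute_adjacent_swap[OF assms(1-3), folded zs'_def]
  have P: "first_class_factor (Suc i) zs' * (1 - zs ! i) = first_class_factor (Suc i) zs * (1 - zs ! Suc i)"
    unfolding zs'_def using first_class_factor_permute_adjacent_swap_edge assms(1,2) by simp
  have same: "pole_factor N zs' = pole_factor N zs" "power_factor N a zs' = power_factor N a zs"
    unfolding zs'_def using assms
    by (simp_all add: pole_factor_permute_adjacent_swap power_factor_permute_adjacent_swap)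
  have nz: "(1 - zs ! i) * (1 - zs ! Suc i) \<noteq> 0" using assms(1,3) by auto
  have "first_class_factor (Suc i) zs' * interaction_factor N zs' * ((1 - zs ! i) * (1 - zs ! Suc i)) =
          (first_class_factor (Suc i) zs' * (1 - zs ! i)) * ((1 - zs ! Suc i) * interaction_factor N zs')"
    by (simp add: mult_ac)
  also have "\<dots> = - (first_class_factor (Suc i) zs * interaction_factor N zs) * ((1 - zs ! i) * (1 - zs ! Suc i))"
    unfolding P Q by (simp add: mult_ac)
  finally have "first_class_factor (Suc i) zs' * interaction_factor N zs' =
                  - (first_class_factor (Suc i) zs * interaction_factor N zs)"
    using nz mult_right_cancel by blast
  then show "tasep_kernel N (Suc i) a zs' = - tasep_kernel N (Suc i) a zs"
    unfolding tasep_kernel_def same by (simp add: mult_ac)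
qed

lemma circ_ints_kernel_blocked:
  assumes "Suc i < N" "k \<le> N" "Suc i \<noteq> k" "length a = N" "a ! i = a ! Suc i" "0 < r" "r < 1"
  shows "circ_ints r N (\<lambda>zs. (1 - zs ! i) * tasep_kernel N k a zs * inv_sum N zs ^ n) = 0"
proof (rule circ_ints_antisymmetric[OF _ bij_betw_adjacent_swap])
  show "has_laurent r N (\<lambda>zs. (1 - zs ! i) * tasep_kernel N k a zs * inv_sum N zs ^ n)"
    using assms
    by (intro has_laurent_kernel_inv_sum_power laurent_multiplier_diff laurent_multiplier_const
          laurent_multiplier_nth) auto
next
  fix zs assume zs: "zs \<in> torus r N"
  let ?zs' = "permute_list (adjacent_swap i) zs"
  have "(1 - ?zs' ! i) * tasep_kernel N k a ?zs' = - ((1 - zs ! i) * tasep_kernel N k a zs)"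
    using tasep_kernel_permute_adjacent_swap(1) assms length_torus[OF zs] nth_torus_neq_1[OF zs] by simp
  then show "(1 - ?zs' ! i) * tasep_kernel N k a ?zs' * inv_sum N ?zs' ^ n =
               - ((1 - zs ! i) * tasep_kernel N k a zs * inv_sum N zs ^ n)"
    using inv_sum_permute_adjacent_swap[OF assms(1) length_torus[OF zs]] by simp
qed (use assms in auto)

lemma circ_ints_kernel_edge:
  assumes "Suc i < N" "length a = N" "a ! i = a ! Suc i" "0 < r" "r < 1"
  shows "circ_ints r N (\<lambda>zs. tasep_kernel N (Suc i) a zs * inv_sum N zs ^ n) = 0"
proof (rule circ_ints_antisymmetric[OF _ bij_betw_adjacent_swap])
  show "has_laurent r N (\<lambda>zs. tasep_kernel N (Suc i) a zs * inv_sum N zs ^ n)"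
    using has_laurent_kernel_inv_sum_power[OF laurent_multiplier_const[of UNIV r N 1], of "Suc i" a n] assms
    by simp
next
  fix zs assume zs: "zs \<in> torus r N"
  show "tasep_kernel N (Suc i) a (permute_list (adjacent_swap i) zs) * inv_sum N (permute_list (adjacent_swap i) zs) ^ n =
          - (tasep_kernel N (Suc i) a zs * inv_sum N zs ^ n)"
    using tasep_kernel_permute_adjacent_swap(2) inv_sum_permute_adjacent_swap[OF assms(1)]
      assms length_torus[OF zs] nth_torus_neq_1[OF zs] by simp
qed (use assms in auto)

section \<open>The kernel integrals solve the master equation\<close>

text \<open>\<open>kernel_integral r N k x n X\<close> is the \<open>n\<close>-th coefficient of the integral as a power series in \<open>t\<close>
  (up to \<open>e\<^sup>-\<^sup>N\<^sup>t\<close> and \<open>n!\<close>), the particles being at \<open>X\<close>.\<close>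

definition kernel_exponents :: "int \<Rightarrow> int list \<Rightarrow> int list" where
  "kernel_exponents x X = map (\<lambda>y. x - y - 1) X"

definition kernel_integral :: "real \<Rightarrow> nat \<Rightarrow> nat \<Rightarrow> int \<Rightarrow> nat \<Rightarrow> int list \<Rightarrow> complex" where
  "kernel_integral r N k x n X =
     circ_ints r N (\<lambda>zs. tasep_kernel N k (kernel_exponents x X) zs * inv_sum N zs ^ n)"

lemma length_kernel_exponents [simp]: "length (kernel_exponents x X) = length X"
  by (simp add: kernel_exponents_def)

lemma nth_kernel_exponents [simp]: "i < length X \<Longrightarrow> kernel_exponents x X ! i = x - X ! i - 1"
  by (simp add: kernel_exponents_def)

lemma kernel_exponents_update:
  "i < length X \<Longrightarrow> kernel_exponents x (X[i := X ! i + d]) = (kernel_exponents x X)[i := kernel_exponents x X ! i - d]"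
  by (simp add: kernel_exponents_def map_update algebra_simps)

lemma tasep_kernel_update:
  assumes "length a = N" "i < N" "zs \<in> torus r N" "r > 0"
  shows "tasep_kernel N k (a[i := a ! i + p]) zs = zs ! i powi p * tasep_kernel N k a zs"
proof -
  have "power_factor N (a[i := a ! i + p]) zs = laurent_monomial (a[i := a ! i + p]) zs"
    using assms(1) by (simp add: power_factor_def laurent_monomial_def)
  also have "\<dots> = zs ! i powi p * laurent_monomial a zs"
    by (rule laurent_monomial_update) (use assms nth_torus_nonzero in auto)
  also have "laurent_monomial a zs = power_factor N a zs"
    using assms(1) by (simp add: power_factor_def laurent_monomial_def)
  finally show ?thesis unfolding tasep_kernel_def by (simp add: mult_ac)
qed

lemma has_laurent_kernel_integrand:
  "k \<le> N \<Longrightarrow> 0 < r \<Longrightarrow> r < 1 \<Longrightarrow> has_laurent r N (\<lambda>zs. tasep_kernel N k a zs * inv_sum N zs ^ n)"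
  using has_laurent_kernel_inv_sum_power[OF laurent_multiplier_const[of UNIV r N 1]] by simp

lemma kernel_integral_Suc:
  assumes "length X = N" "k \<le> N" "0 < r" "r < 1"
  shows "kernel_integral r N k x (Suc n) X = (\<Sum>i<N. kernel_integral r N k x n (X[i := X ! i + 1]))"
proof -
  have "tasep_kernel N k (kernel_exponents x X) zs * inv_sum N zs ^ Suc n =
          (\<Sum>i<N. tasep_kernel N k (kernel_exponents x (X[i := X ! i + 1])) zs * inv_sum N zs ^ n)"
    if zs: "zs \<in> torus r N" for zs
  proof -
    have "tasep_kernel N k (kernel_exponents x (X[i := X ! i + 1])) zs =
            zs ! i powi (-1) * tasep_kernel N k (kernel_exponents x X) zs" if "i < N" for i
      using tasep_kernel_update[of "kernel_exponents x X" N i zs r k "-1"] kernel_exponents_update[of i X x 1]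
        that assms zs by simp
    then show ?thesis
      by (simp add: inv_sum_def sum_distrib_left sum_distrib_right mult_ac)
  qed
  then have "kernel_integral r N k x (Suc n) X =
      circ_ints r N (\<lambda>zs. \<Sum>i<N. tasep_kernel N k (kernel_exponents x (X[i := X ! i + 1])) zs * inv_sum N zs ^ n)"
    unfolding kernel_integral_def using assms by (intro circ_ints_cong) auto
  also have "\<dots> = (\<Sum>i<N. kernel_integral r N k x n (X[i := X ! i + 1]))"
    unfolding kernel_integral_def using assms by (intro circ_ints_sum has_laurent_kernel_integrand) auto
  finally show ?thesis .
qed

text \<open>A jump onto the next particle of the same class: the two kernel integrals differ by the integral
  of \<open>(1 - \<xi>\<^sub>i)\<close> times a kernel with equal exponents \<open>a\<^sub>i = a\<^sub>i\<^sub>+\<^sub>1\<close>, which vanishes by antisymmetry.\<close>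

lemma kernel_integral_blocked:
  assumes "Suc i < N" "k \<le> N" "Suc i \<noteq> k" "length X = N" "X ! Suc i = X ! i + 1" "0 < r" "r < 1"
  shows "kernel_integral r N k x n (X[i := X ! i + 1]) = kernel_integral r N k x n X"
proof -
  define a where "a = kernel_exponents x (X[i := X ! i + 1])"
  have la: "length a = N" using assms(4) by (simp add: a_def)
  have "X = (X[i := X ! i + 1])[i := (X[i := X ! i + 1]) ! i + (-1)]"
    using assms(1,4) by simp
  then have aX: "kernel_exponents x X = a[i := a ! i + 1]"
    using kernel_exponents_update[of i "X[i := X ! i + 1]" x "-1"] assms(1,4) by (simp add: a_def)
  have aa: "a ! i = a ! Suc i" using assms(1,4,5) by (simp add: a_def)
  have split: "tasep_kernel N k a zs * inv_sum N zs ^ n =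
      (1 - zs ! i) * tasep_kernel N k a zs * inv_sum N zs ^ n + zs ! i * tasep_kernel N k a zs * inv_sum N zs ^ n"
    for zs by (simp add: algebra_simps)
  have "kernel_integral r N k x n X = circ_ints r N (\<lambda>zs. zs ! i * tasep_kernel N k a zs * inv_sum N zs ^ n)"
    unfolding kernel_integral_def aX
    by (rule circ_ints_cong) (use assms tasep_kernel_update[OF la, of i _ r k 1] in auto)
  moreover have "kernel_integral r N k x n (X[i := X ! i + 1]) =
      circ_ints r N (\<lambda>zs. (1 - zs ! i) * tasep_kernel N k a zs * inv_sum N zs ^ n) +
      circ_ints r N (\<lambda>zs. zs ! i * tasep_kernel N k a zs * inv_sum N zs ^ n)"
    unfolding kernel_integral_def a_def[symmetric] split using assms
    by (intro circ_ints_add has_laurent_kernel_inv_sum_power laurent_multiplier_diff laurent_multiplier_const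
          laurent_multiplier_nth) auto
  ultimately show ?thesis
    using circ_ints_kernel_blocked[OF assms(1-3) la aa assms(6,7)] by simp
qed

lemma kernel_integral_edge:
  assumes "Suc i < N" "length X = N" "X ! Suc i = X ! i + 1" "0 < r" "r < 1"
  shows "kernel_integral r N (Suc i) x n (X[i := X ! i + 1]) = 0"
  unfolding kernel_integral_def by (rule circ_ints_kernel_edge) (use assms in auto)

section \<open>The initial condition\<close>

lemma circ_ints_1_powi:
  assumes "r > 0"
  shows "circ_ints r 1 (\<lambda>ws. ws ! 0 powi e) = 2 * of_real pi * \<i> * (if e = -1 then 1 else 0)"
proof -
  have "laurent_expansion r 1 (\<lambda>ws. ws ! 0 powi e * 1) (\<lambda>m. if m[0 := m ! 0 - e] = [0] then 1 else 0)"
    using laurent_expansion_shift[OF laurent_expansion_one[of r 1] _ assms, of 0 e] by simp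
  from circ_ints_laurent_expansion[OF this assms] show ?thesis by auto
qed

lemma circ_ints_1_powi_div_one_minus:
  assumes "0 < r" "r < 1"
  shows "circ_ints r 1 (\<lambda>ws. ws ! 0 powi e / (1 - ws ! 0)) = 2 * of_real pi * \<i> * (if e \<le> -1 then 1 else 0)"
proof -
  define c where "c m = (if m[0 := m ! 0 - e] = [0] then 1 else (0::complex))" for m :: "int list"
  have "laurent_expansion r 1 (\<lambda>ws. ws ! 0 powi e * 1) c"
    unfolding c_def using laurent_expansion_shift[OF laurent_expansion_one[of r 1] _ assms(1), of 0 e] by simp
  from laurent_expansion_geometric[OF this _ assms]
  have "laurent_expansion r 1 (\<lambda>ws. ws ! 0 powi e / (1 - ws ! 0)) (\<lambda>m. \<Sum>\<^sub>\<infinity>k. c (m[0 := m ! 0 - int k]))"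
    by simp
  moreover have "(\<Sum>\<^sub>\<infinity>k. c ([-1][0 := [-1] ! 0 - int k])) = (if e \<le> -1 then 1 else 0)"
  proof (cases "e \<le> -1")
    case True
    have "((\<lambda>k. c ([-1][0 := [-1] ! 0 - int k])) has_sum 1) {nat (-1 - e)}"
      using has_sum_finite[of "{nat (-1 - e)}" "\<lambda>k. c ([-1][0 := [-1] ! 0 - int k])"] True
      by (simp add: c_def)
    then have "((\<lambda>k. c ([-1][0 := [-1] ! 0 - int k])) has_sum 1) UNIV"
      by (rule has_sum_cong_neutral[THEN iffD1, rotated -1]) (auto simp: c_def)
    then show ?thesis using True by (simp add: infsumI)
  qed (auto simp: c_def)
  ultimately show ?thesis
    using circ_ints_laurent_expansion assms(1) by fastforce
qed

lemma circ_ints_1_powi_poly: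
  assumes "r > 0" "e \<le> -1"
  shows "circ_ints r 1 (\<lambda>ws. ws ! 0 powi e * poly p (ws ! 0)) = 2 * of_real pi * \<i> * coeff p (nat (-1 - e))"
proof -
  have "circ_ints r 1 (\<lambda>ws. ws ! 0 powi e * poly p (ws ! 0)) =
          circ_ints r 1 (\<lambda>ws. \<Sum>d\<le>degree p. coeff p d * ws ! 0 powi (e + int d))"
  proof (rule circ_ints_cong)
    fix ws assume "ws \<in> torus r 1"
    then have "ws ! 0 \<noteq> 0" using nth_torus_nonzero assms(1) by simp
    then show "ws ! 0 powi e * poly p (ws ! 0) = (\<Sum>d\<le>degree p. coeff p d * ws ! 0 powi (e + int d))"
      unfolding poly_altdef sum_distrib_left by (intro sum.cong refl) (simp add: power_int_add mult_ac)
  qed (use assms in auto)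
  also have "\<dots> = (\<Sum>d\<le>degree p. circ_ints r 1 (\<lambda>ws. coeff p d * ws ! 0 powi (e + int d)))"
    using assms
    by (intro circ_ints_sum laurent_multiplier_imp_has_laurent_in laurent_multiplier_mult laurent_multiplier_const
          laurent_multiplier_powi) auto
  also have "\<dots> = (\<Sum>d\<le>degree p. coeff p d * (2 * of_real pi * \<i> * (if e + int d = -1 then 1 else 0)))"
    by (intro sum.cong refl) (simp only: circ_ints_cmult circ_ints_1_powi[OF assms(1)])
  also have "\<dots> = (\<Sum>d\<le>degree p. if d = nat (-1 - e) then coeff p d * (2 * of_real pi * \<i>) else 0)"
    using assms by (intro sum.cong refl) auto
  also have "\<dots> = 2 * of_real pi * \<i> * coeff p (nat (-1 - e))"
    by (auto simp: sum.delta coeff_eq_0 mult_ac)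
  finally show ?thesis .
qed

text \<open>Writing \<open>p(w) = (w - 1) s(w) + p(1)\<close>, the polynomial part \<open>s\<close> has too small a degree to
  contribute a residue, so only \<open>p(1) w\<^sup>e / (1 - w)\<close> does.\<close>

lemma circ_ints_1_powi_poly_div_one_minus:
  assumes "0 < r" "r < 1" "e \<le> -1" "int (degree p) \<le> -1 - e"
  shows "circ_ints r 1 (\<lambda>ws. ws ! 0 powi e * poly p (ws ! 0) / (1 - ws ! 0)) = 2 * of_real pi * \<i> * poly p 1"
proof -
  define s where "s = synthetic_div p 1"
  have p_eq: "poly p w = (w - 1) * poly s w + poly p 1" for w
    using synthetic_div_correct'[of 1 p] by (simp add: s_def algebra_simps flip: poly_pCons)
  have "coeff s (nat (-1 - e)) = 0"
  proof (cases "degree p = 0")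
    case True
    then have "s = 0" unfolding s_def using synthetic_div_eq_0_iff by blast
    then show ?thesis by simp
  next
    case False
    then show ?thesis using assms(4) degree_synthetic_div[of p 1] by (simp add: s_def coeff_eq_0)
  qed
  have "laurent_multiplier UNIV r 1 (\<lambda>ws. ws ! 0 ^ d)" for d
    using laurent_multiplier_powi[of 0 1 r UNIV "int d"] assms(1) by simp
  then have mult: "laurent_multiplier UNIV r 1 (\<lambda>ws. ws ! 0 powi e)" "laurent_multiplier UNIV r 1 (\<lambda>ws. poly s (ws ! 0))"
    "laurent_multiplier UNIV r 1 (\<lambda>ws. 1 / (1 - ws ! 0))"
    using assms unfolding poly_altdef
    by (auto intro!: laurent_multiplier_powi laurent_multiplier_sum laurent_multiplier_mult
                     laurent_multiplier_const laurent_multiplier_geometric simp del: power_0_left)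
  have "circ_ints r 1 (\<lambda>ws. ws ! 0 powi e * poly p (ws ! 0) / (1 - ws ! 0)) =
          circ_ints r 1 (\<lambda>ws. (-1) * (ws ! 0 powi e * poly s (ws ! 0)) + poly p 1 * (ws ! 0 powi e * (1 / (1 - ws ! 0))))"
  proof (rule circ_ints_cong)
    fix ws assume "ws \<in> torus r 1"
    then have "1 - ws ! 0 \<noteq> 0" using nth_torus_neq_1 assms(2) by fastforce
    then show "ws ! 0 powi e * poly p (ws ! 0) / (1 - ws ! 0) =
                 (-1) * (ws ! 0 powi e * poly s (ws ! 0)) + poly p 1 * (ws ! 0 powi e * (1 / (1 - ws ! 0)))"
      unfolding p_eq[of "ws ! 0"] by (simp add: field_simps)
  qed (use assms in auto)
  also have "\<dots> = (-1) * circ_ints r 1 (\<lambda>ws. ws ! 0 powi e * poly s (ws ! 0)) +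
                  poly p 1 * circ_ints r 1 (\<lambda>ws. ws ! 0 powi e * (1 / (1 - ws ! 0)))"
  proof -
    have "has_laurent r 1 (\<lambda>ws. (-1) * (ws ! 0 powi e * poly s (ws ! 0)))"
      "has_laurent r 1 (\<lambda>ws. poly p 1 * (ws ! 0 powi e * (1 / (1 - ws ! 0))))"
      by (intro laurent_multiplier_imp_has_laurent_in laurent_multiplier_mult laurent_multiplier_const mult; simp)+
    then show ?thesis by (simp only: circ_ints_add[OF _ _ assms(1)] circ_ints_cmult)
  qed
  also have "\<dots> = 2 * of_real pi * \<i> * poly p 1"
    using circ_ints_1_powi_div_one_minus[OF assms(1,2), of e] \<open>coeff s _ = 0\<close> assms(3)
    by (simp only: circ_ints_1_powi_poly[OF assms(1,3)]) simp
  finally show ?thesis .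
qed

definition root_poly :: "complex list \<Rightarrow> complex poly" where
  "root_poly zs = (\<Prod>l<length zs. [:- zs ! l, 1:])"

lemma poly_root_poly: "poly (root_poly zs) w = (\<Prod>l<length zs. (w - zs ! l))"
  unfolding root_poly_def poly_prod by simp

lemma degree_root_poly: "degree (root_poly zs) = length zs"
  unfolding root_poly_def by (subst degree_prod_sum_eq) auto

lemma coeff_root_poly_length: "coeff (root_poly zs) (length zs) = 1"
  using lead_coeff_prod[of "\<lambda>l. [:- zs ! l, 1:]" "{..<length zs}"]
  by (simp add: degree_root_poly root_poly_def[symmetric])

lemma tasep_kernel_snoc:
  assumes "length zs = N" "length a = N" "k \<le> Suc N"
  shows "tasep_kernel (Suc N) k (a @ [e]) (zs @ [w]) =
           (if k \<le> N then first_class_factor k zs else first_class_factor N zs * (1 - w)) *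
           interaction_factor N zs * pole_factor N zs * power_factor N a zs *
           (poly (root_poly zs) w * pole_factor N zs * w powi e / (1 - w))"
proof -
  have "first_class_factor k (zs @ [w]) = first_class_factor k zs" if "k \<le> N" for k
    unfolding first_class_factor_def using that assms(1) by (intro prod.cong) (auto simp: nth_append)
  then have "first_class_factor k (zs @ [w]) =
               (if k \<le> N then first_class_factor k zs else first_class_factor N zs * (1 - w))"
    using assms(1,3) by (cases "k \<le> N") (auto simp: first_class_factor_def le_Suc_eq)
  moreover have "interaction_factor (Suc N) (zs @ [w]) = interaction_factor N zs * (\<Prod>l<N. (w - zs ! l) / (1 - zs ! l))"
    unfolding interaction_factor_def using assms(1) by (auto simp: nth_append intro!: prod.cong)
  moreover have "(\<Prod>l<N. (w - zs ! l) / (1 - zs ! l)) = poly (root_poly zs) w * pole_factor N zs"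
    unfolding poly_root_poly pole_factor_def using assms(1) by (simp add: prod.distrib[symmetric] divide_inverse)
  moreover have "pole_factor (Suc N) (zs @ [w]) = pole_factor N zs * (1 / (1 - w))"
    unfolding pole_factor_def using assms(1) by (auto simp: nth_append intro!: prod.cong)
  moreover have "power_factor (Suc N) (a @ [e]) (zs @ [w]) = power_factor N a zs * w powi e"
    unfolding power_factor_def using assms by (auto simp: nth_append intro!: prod.cong)
  ultimately show ?thesis by (simp add: tasep_kernel_def divide_inverse mult_ac)
qed

lemma pole_factor_inverse:
  assumes "length zs = N" "\<forall>l<N. zs ! l \<noteq> 1"
  shows "poly (root_poly zs) 1 * pole_factor N zs = 1" "first_class_factor N zs * pole_factor N zs = 1"
  using assms unfolding poly_root_poly pole_factor_def first_class_factor_def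
  by (simp_all add: prod.distrib[symmetric])

lemma torus_1_eq: "ws \<in> torus r 1 \<Longrightarrow> ws = [ws ! 0]"
  by (cases ws) (auto simp: torus_def)

lemma circ_ints_1_tasep_kernel_snoc:
  assumes "k \<le> N" "zs \<in> torus r N" "length a = N" "e \<le> - int N - 1" "0 < r" "r < 1"
  shows "circ_ints r 1 (\<lambda>ws. tasep_kernel (Suc N) k (a @ [e]) (zs @ ws)) = 2 * of_real pi * \<i> * tasep_kernel N k a zs"
proof -
  have lz: "length zs = N" using length_torus[OF assms(2)] .
  have "circ_ints r 1 (\<lambda>ws. tasep_kernel (Suc N) k (a @ [e]) (zs @ ws)) =
          circ_ints r 1 (\<lambda>ws. (tasep_kernel N k a zs * pole_factor N zs) *
                               (ws ! 0 powi e * poly (root_poly zs) (ws ! 0) / (1 - ws ! 0)))"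
  proof (rule circ_ints_cong)
    fix ws assume "ws \<in> torus r 1"
    then have "ws = [ws ! 0]" by (rule torus_1_eq)
    moreover have "tasep_kernel (Suc N) k (a @ [e]) (zs @ [w]) =
        (tasep_kernel N k a zs * pole_factor N zs) * (w powi e * poly (root_poly zs) w / (1 - w))" for w
      using tasep_kernel_snoc[OF lz assms(3), of k e w] assms(1)
      unfolding tasep_kernel_def by (simp add: divide_inverse mult_ac)
    ultimately show "tasep_kernel (Suc N) k (a @ [e]) (zs @ ws) =
        (tasep_kernel N k a zs * pole_factor N zs) * (ws ! 0 powi e * poly (root_poly zs) (ws ! 0) / (1 - ws ! 0))"
      by metis
  qed (use assms in auto)
  also have "\<dots> = (tasep_kernel N k a zs * pole_factor N zs) * (2 * of_real pi * \<i> * poly (root_poly zs) 1)"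
    using assms(4-6) lz
    by (simp only: circ_ints_cmult circ_ints_1_powi_poly_div_one_minus degree_root_poly)
  also have "\<dots> = 2 * of_real pi * \<i> * tasep_kernel N k a zs"
    using pole_factor_inverse(1)[OF lz] nth_torus_neq_1[OF assms(2,6)] by (simp add: mult_ac)
  finally show ?thesis .
qed

lemma circ_ints_1_tasep_kernel_snoc_full:
  assumes "zs \<in> torus r N" "length a = N" "e \<le> - int N - 1" "0 < r" "r < 1"
  shows "circ_ints r 1 (\<lambda>ws. tasep_kernel (Suc N) (Suc N) (a @ [e]) (zs @ ws)) =
           2 * of_real pi * \<i> * (if e = - int N - 1 then tasep_kernel N 0 a zs else 0)"
proof -
  have lz: "length zs = N" using length_torus[OF assms(1)] .
  have "circ_ints r 1 (\<lambda>ws. tasep_kernel (Suc N) (Suc N) (a @ [e]) (zs @ ws)) =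
          circ_ints r 1 (\<lambda>ws. tasep_kernel N 0 a zs * (ws ! 0 powi e * poly (root_poly zs) (ws ! 0)))"
  proof (rule circ_ints_cong)
    fix ws assume ws: "ws \<in> torus r 1"
    define w where "w = ws ! 0"
    have "1 - w \<noteq> 0" using nth_torus_neq_1[OF ws assms(5)] by (simp add: w_def)
    have "first_class_factor N zs * pole_factor N zs = 1"
      using pole_factor_inverse(2)[OF lz] nth_torus_neq_1[OF assms(1,5)] by simp
    have "tasep_kernel (Suc N) (Suc N) (a @ [e]) (zs @ [w]) =
        (first_class_factor N zs * pole_factor N zs) * ((1 - w) * inverse (1 - w)) *
        (interaction_factor N zs * pole_factor N zs * power_factor N a zs) * (w powi e * poly (root_poly zs) w)"
      using tasep_kernel_snoc[OF lz assms(2), of "Suc N" e w] by (simp add: divide_inverse mult_ac)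
    also have "\<dots> = tasep_kernel N 0 a zs * (w powi e * poly (root_poly zs) w)"
      using \<open>1 - w \<noteq> 0\<close> \<open>first_class_factor N zs * _ = 1\<close>
      by (simp add: tasep_kernel_def first_class_factor_def)
    finally show "tasep_kernel (Suc N) (Suc N) (a @ [e]) (zs @ ws) =
                    tasep_kernel N 0 a zs * (ws ! 0 powi e * poly (root_poly zs) (ws ! 0))"
      using torus_1_eq[OF ws] by (simp add: w_def)
  qed (use assms in auto)
  also have "\<dots> = tasep_kernel N 0 a zs * (2 * of_real pi * \<i> * coeff (root_poly zs) (nat (-1 - e)))"
    using assms(3,4) by (simp only: circ_ints_cmult circ_ints_1_powi_poly)
  also have "coeff (root_poly zs) (nat (-1 - e)) = (if e = - int N - 1 then 1 else 0)"
    using assms(3) lz coeff_root_poly_length[of zs] by (auto simp: coeff_eq_0 degree_root_poly)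
  finally show ?thesis by simp
qed

text \<open>If all exponents of the first variable are nonnegative, there is no residue at \<open>\<xi>\<^sub>1 = 0\<close>.\<close>

definition nonneg_head :: "int list set" where
  "nonneg_head = {m. m = [] \<or> 0 \<le> hd m}"

lemma update_in_nonneg_head:
  "m \<in> nonneg_head \<Longrightarrow> (i = 0 \<longrightarrow> 0 \<le> p) \<Longrightarrow> m[i := m ! i + p] \<in> nonneg_head"
  by (cases m; cases i) (auto simp: nonneg_head_def)

lemma circ_ints_tasep_kernel_eq_0:
  assumes "k \<le> N" "0 < r" "r < 1" "0 < N" "0 \<le> a ! 0"
  shows "circ_ints r N (tasep_kernel N k a) = 0"
proof (rule circ_ints_eq_0_if_has_laurent_in)
  have "\<forall>m\<in>nonneg_head. \<forall>i<N. \<forall>p::nat. m[i := m ! i + int p] \<in> nonneg_head"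
    "\<forall>m\<in>nonneg_head. \<forall>i<N. m[i := m ! i + a ! i] \<in> nonneg_head"
    using assms(5) by (auto intro: update_in_nonneg_head)
  moreover have "replicate N 0 \<in> nonneg_head"
    by (cases N) (auto simp: nonneg_head_def)
  ultimately show "has_laurent_in nonneg_head r N (tasep_kernel N k a)"
    using assms by (intro laurent_multiplier_imp_has_laurent_in laurent_multiplier_tasep_kernel)
  show "replicate N (-1) \<notin> nonneg_head"
    using assms(4) by (cases N) (auto simp: nonneg_head_def)
qed (use assms in auto)

definition initial_event :: "nat \<Rightarrow> nat \<Rightarrow> int \<Rightarrow> int list \<Rightarrow> bool" where
  "initial_event N k x X = (if k = 0 then (0 < N \<longrightarrow> x \<le> X ! 0) else (\<forall>j<k. X ! j = x + int j))"

lemma sorted_wrt_less_nth_gap: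
  assumes "sorted_wrt (<) (X :: int list)" "i \<le> j" "j < length X"
  shows "X ! i + int (j - i) \<le> X ! j"
  using assms(2,3)
proof (induction j)
  case 0
  then show ?case by simp
next
  case (Suc j)
  show ?case
  proof (cases "i = Suc j")
    case False
    then have "X ! i + int (j - i) \<le> X ! j" "i \<le> j" using Suc by auto
    moreover have "X ! j < X ! Suc j" using assms(1) Suc.prems by (simp add: sorted_wrt_iff_nth_less)
    ultimately show ?thesis by (simp add: Suc_diff_le)
  qed simp
qed

lemma sorted_wrt_less_block_iff:
  assumes "sorted_wrt (<) (X :: int list)" "length X = Suc N" "x \<le> X ! 0"
  shows "X ! N = x + int N \<longleftrightarrow> (\<forall>j<Suc N. X ! j = x + int j)"
proof
  assume "X ! N = x + int N"
  moreover have "X ! 0 + int j \<le> X ! j" "X ! j + int (N - j) \<le> X ! N" if "j < Suc N" for j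
    using sorted_wrt_less_nth_gap[OF assms(1), of 0 j] sorted_wrt_less_nth_gap[OF assms(1), of j N] that assms(2)
    by auto
  ultimately show "\<forall>j<Suc N. X ! j = x + int j" using assms(3) by fastforce
qed auto

lemma kernel_integral_0_snoc_eq:
  "kernel_integral r (Suc N) k x 0 (X @ [y]) =
     circ_ints r N (\<lambda>zs. circ_ints r 1 (\<lambda>ws. tasep_kernel (Suc N) k (kernel_exponents x X @ [x - y - 1]) (zs @ ws)))"
  unfolding kernel_integral_def by (simp only: power_0 mult_1_right circ_ints_Suc_append) (simp add: kernel_exponents_def)

lemma kernel_integral_0_snoc:
  assumes "k \<le> N" "length X = N" "x - y - 1 \<le> - int N - 1" "0 < r" "r < 1"
  shows "kernel_integral r (Suc N) k x 0 (X @ [y]) = 2 * of_real pi * \<i> * kernel_integral r N k x 0 X"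
proof -
  have "kernel_integral r (Suc N) k x 0 (X @ [y]) =
          circ_ints r N (\<lambda>zs. 2 * of_real pi * \<i> * tasep_kernel N k (kernel_exponents x X) zs)"
    unfolding kernel_integral_0_snoc_eq
    by (rule circ_ints_cong) (use circ_ints_1_tasep_kernel_snoc[OF assms(1) _ _ assms(3-5)] assms in auto)
  then show ?thesis
    unfolding kernel_integral_def by (simp add: circ_ints_cmult)
qed

lemma kernel_integral_0_snoc_full:
  assumes "length X = N" "x - y - 1 \<le> - int N - 1" "0 < r" "r < 1"
  shows "kernel_integral r (Suc N) (Suc N) x 0 (X @ [y]) =
           2 * of_real pi * \<i> * (if y = x + int N then 1 else 0) * kernel_integral r N 0 x 0 X"
proof -
  have "kernel_integral r (Suc N) (Suc N) x 0 (X @ [y]) =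
          circ_ints r N (\<lambda>zs. (2 * of_real pi * \<i> * (if y = x + int N then 1 else 0)) *
                               tasep_kernel N 0 (kernel_exponents x X) zs)"
    unfolding kernel_integral_0_snoc_eq
    by (rule circ_ints_cong) (use circ_ints_1_tasep_kernel_snoc_full[OF _ _ assms(2-4)] assms in auto)
  then show ?thesis
    unfolding kernel_integral_def by (simp only: circ_ints_cmult power_0 mult_1_right)
qed

text \<open>Induction on the number of particles, integrating out the last variable; its exponent
  \<open>x - y\<^sub>N - 1 \<le> -N - 1\<close> makes the residue at \<open>\<xi>\<^sub>N = 0\<close> vanish, leaving the one at \<open>\<xi>\<^sub>N = 1\<close>.\<close>

lemma kernel_integral_0:
  assumes "0 < r" "r < 1"
  shows "length X = N \<Longrightarrow> sorted_wrt (<) X \<Longrightarrow> k \<le> N \<Longrightarrow>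
         kernel_integral r N k x 0 X = (2 * of_real pi * \<i>) ^ N * (if initial_event N k x X then 1 else 0)"
proof (induction N arbitrary: X k)
  case 0
  then show ?case
    by (simp add: kernel_integral_def initial_event_def tasep_kernel_def first_class_factor_def
                  interaction_factor_def pole_factor_def power_factor_def)
next
  case (Suc N)
  show ?case
  proof (cases "X ! 0 < x")
    case True
    then have "kernel_integral r (Suc N) k x 0 X = 0"
      unfolding kernel_integral_def using Suc.prems assms by (simp add: circ_ints_tasep_kernel_eq_0)
    moreover have "\<not> initial_event (Suc N) k x X" using True by (auto simp: initial_event_def)
    ultimately show ?thesis by simp
  next
    case False
    define X' where "X' = butlast X"
    have X: "X = X' @ [X ! N]" using Suc.prems(1) unfolding X'_def
      by (metis append_butlast_last_id last_conv_nth list.size(3) nat.distinct(1) diff_Suc_1)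
    have "sorted_wrt (<) (X' @ [X ! N])" using Suc.prems(2) X by simp
    then have X': "length X' = N" "sorted_wrt (<) X'" "\<forall>j<N. X' ! j = X ! j"
      using Suc.prems(1) by (auto simp: X'_def nth_butlast sorted_wrt_append)
    have "X ! 0 + int N \<le> X ! N" using sorted_wrt_less_nth_gap[OF Suc.prems(2), of 0 N] Suc.prems(1) by simp
    then have e: "x - X ! N - 1 \<le> - int N - 1" using False by simp
    show ?thesis
    proof (cases "k \<le> N")
      case True
      moreover have "initial_event N k x X' = initial_event (Suc N) k x X"
        using True False X' by (auto simp: initial_event_def)
      ultimately show ?thesis
        using Suc.IH[OF X'(1,2) True] kernel_integral_0_snoc[OF True X'(1) e assms] X by simp
    next
      case False
      then have k: "k = Suc N" using Suc.prems(3) by simp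
      have "initial_event N 0 x X'" using \<open>\<not> X ! 0 < x\<close> X' by (auto simp: initial_event_def)
      moreover have "X ! N = x + int N \<longleftrightarrow> initial_event (Suc N) k x X"
        using sorted_wrt_less_block_iff[OF Suc.prems(2,1), of x] \<open>\<not> X ! 0 < x\<close> k
        by (auto simp: initial_event_def)
      ultimately show ?thesis
        using Suc.IH[OF X'(1,2)] kernel_integral_0_snoc_full[OF X'(1) e assms] X k by (simp add: mult_ac)
    qed
  qed
qed

section \<open>The jump chain\<close>

text \<open>A second class particle immediately to the left of a first class one can never be passed again,
  so from such a labelling the labels never return to the order \<open>nu N k\<close>.\<close>

definition labels_inverted :: "nat list \<Rightarrow> bool" where
  "labels_inverted p \<longleftrightarrow> (\<exists>i. Suc i < length p \<and> p ! i = 1 \<and> p ! Suc i = 2)"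

lemma attempt_Pair:
  "attempt i (X, p) =
     (if Suc i < length X \<and> X ! Suc i = X ! i + 1 then
        (if p ! i = 2 \<and> p ! Suc i = 1 then (X, p[i := p ! Suc i, Suc i := p ! i]) else (X, p))
      else (X[i := X ! i + 1], p))"
  by (simp add: attempt_def)

lemma nth_nu: "k \<le> N \<Longrightarrow> j < N \<Longrightarrow> nu N k ! j = (if j < k then 2 else 1)"
  by (auto simp: nu_def nth_append)

lemma length_nu [simp]: "k \<le> N \<Longrightarrow> length (nu N k) = N"
  by (simp add: nu_def)

lemma jump_prob_labels_inverted:
  assumes "labels_inverted p" "length p = length X" "k \<le> N"
  shows "jump_prob N n (event_E N k x) (X, p) = 0"
  using assms(1,2)
proof (induction n arbitrary: X p)
  case 0
  then have "p \<noteq> nu N k"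
    using assms(3) by (auto simp: labels_inverted_def nu_def nth_append split: if_splits)
  then show ?case by (simp add: event_E_def)
next
  case (Suc n)
  have "jump_prob N n (event_E N k x) (attempt i (X, p)) = 0" for i
  proof (cases "Suc i < length X \<and> X ! Suc i = X ! i + 1 \<and> p ! i = 2 \<and> p ! Suc i = 1")
    case True
    then have "labels_inverted (p[i := p ! Suc i, Suc i := p ! i])"
      unfolding labels_inverted_def using Suc.prems(2) by (intro exI[of _ i]) auto
    with True show ?thesis using Suc.IH Suc.prems(2) by (simp add: attempt_Pair)
  next
    case False
    then show ?thesis using Suc.IH Suc.prems by (auto simp: attempt_Pair)
  qed
  then show ?case by simp
qed

lemma jump_prob_bounds: "0 \<le> jump_prob N n E s \<and> jump_prob N n E s \<le> 1"
proof (induction n arbitrary: s)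
  case 0
  then show ?case by simp
next
  case (Suc n)
  have "0 \<le> (\<Sum>i<N. jump_prob N n E (attempt i s))"
    using Suc by (intro sum_nonneg) auto
  moreover have "(\<Sum>i<N. jump_prob N n E (attempt i s)) \<le> (\<Sum>i<N. 1)"
    using Suc by (intro sum_mono) auto
  ultimately
  show ?case by (cases "N = 0") (auto simp: divide_le_eq)
qed

lemma sorted_wrt_less_update_Suc:
  assumes "length X = N" "sorted_wrt (<) (X :: int list)" "i < N" "\<not> (Suc i < N \<and> X ! Suc i = X ! i + 1)"
  shows "sorted_wrt (<) (X[i := X ! i + 1])"
  unfolding sorted_wrt_iff_nth_less
proof (intro allI impI)
  fix a b assume ab: "a < b" "b < length (X[i := X ! i + 1])"
  have lt: "X ! a < X ! b" if "a < b" "b < N" for a b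
    using assms(1,2) that by (simp add: sorted_wrt_iff_nth_less)
  show "X[i := X ! i + 1] ! a < X[i := X ! i + 1] ! b"
  proof (cases "a = i")
    case True
    then have "Suc i < N" "Suc i \<le> b" using ab assms(1) by auto
    then have "X ! i + 1 < X ! Suc i" "X ! Suc i \<le> X ! b"
      using assms(4) lt[of i "Suc i"] lt[of "Suc i" b] ab assms(1) by (auto simp: le_less)
    then show ?thesis using True ab assms(1) by auto
  next
    case False
    then show ?thesis using ab assms(1,3) lt[of a b] lt[of a i] by (auto simp: nth_list_update)
  qed
qed

lemma jump_prob_attempt_exchange:
  assumes "Suc i < N" "length X = N" "X ! Suc i = X ! i + 1"
  shows "jump_prob N n (event_E N (Suc i) x) (attempt i (X, nu N (Suc i))) = 0"
proof -
  let ?p = "nu N (Suc i)"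
  have "?p ! i = 2" "?p ! Suc i = 1" using assms(1) by (simp_all add: nth_nu)
  moreover have "labels_inverted (?p[i := ?p ! Suc i, Suc i := ?p ! i])"
    unfolding labels_inverted_def using assms(1) calculation by (intro exI[of _ i]) auto
  ultimately show ?thesis
    using jump_prob_labels_inverted assms by (simp add: attempt_Pair)
qed

lemma attempt_blocked:
  "Suc i < length X \<Longrightarrow> X ! Suc i = X ! i + 1 \<Longrightarrow> Suc i \<noteq> k \<Longrightarrow> k \<le> length X \<Longrightarrow>
     attempt i (X, nu (length X) k) = (X, nu (length X) k)"
  by (auto simp: attempt_Pair nth_nu)

lemma attempt_free:
  "\<not> (Suc i < length X \<and> X ! Suc i = X ! i + 1) \<Longrightarrow> attempt i (X, p) = (X[i := X ! i + 1], p)"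
  by (auto simp: attempt_Pair)

theorem kernel_integral_eq_jump_prob:
  assumes "N \<ge> 1" "k \<le> N" "0 < r" "r < 1"
  shows "length X = N \<Longrightarrow> sorted_wrt (<) X \<Longrightarrow>
    kernel_integral r N k x n X = (2 * of_real pi * \<i>) ^ N * of_real (real N ^ n * jump_prob N n (event_E N k x) (X, nu N k))"
proof (induction n arbitrary: X)
  case 0
  have "event_E N k x (X, nu N k) = initial_event N k x X"
    using assms(1) by (simp add: event_E_def initial_event_def)
  then show ?case using kernel_integral_0[OF assms(3,4) 0 assms(2)] by simp
next
  case (Suc n)
  let ?E = "event_E N k x" and ?P = "(2 * of_real pi * \<i>) ^ N :: complex"
  have step: "kernel_integral r N k x n (X[i := X ! i + 1]) =
                ?P * of_real (real N ^ n * jump_prob N n ?E (attempt i (X, nu N k)))" if i: "i < N" for i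
  proof (cases "Suc i < N \<and> X ! Suc i = X ! i + 1")
    case True
    then show ?thesis
      using jump_prob_attempt_exchange kernel_integral_edge attempt_blocked kernel_integral_blocked Suc assms
      by (cases "Suc i = k") auto
  next
    case False
    then show ?thesis
      using Suc.IH[of "X[i := X ! i + 1]"] sorted_wrt_less_update_Suc[OF Suc.prems i False] attempt_free Suc.prems(1)
      by simp
  qed
  have "real N ^ Suc n * jump_prob N (Suc n) ?E (X, nu N k) =
          (\<Sum>i<N. real N ^ n * jump_prob N n ?E (attempt i (X, nu N k)))"
    using assms(1) by (simp add: sum_distrib_left field_simps)
  then have "?P * of_real (real N ^ Suc n * jump_prob N (Suc n) ?E (X, nu N k)) =
               (\<Sum>i<N. kernel_integral r N k x n (X[i := X ! i + 1]))"
    by (simp add: step sum_distrib_left)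
  also have "\<dots> = kernel_integral r N k x (Suc n) X"
    using kernel_integral_Suc Suc.prems assms by simp
  finally show ?case ..
qed

section \<open>Expansion in powers of \<open>t\<close>\<close>

lemma integrand_eq_tasep_kernel:
  assumes "length Y = N" "zs \<in> torus r N" "r > 0"
  shows "integrand N k x t Y zs =
           exp (- of_real (real N * t)) * (tasep_kernel N k (kernel_exponents x Y) zs * exp (of_real t * inv_sum N zs))"
proof -
  have "(\<Prod>i<N. exp (eps (zs ! i) * of_real t)) = exp (\<Sum>i<N. eps (zs ! i) * of_real t)"
    by (simp add: exp_sum)
  also have "(\<Sum>i<N. eps (zs ! i) * of_real t) = - of_real (real N * t) + of_real t * inv_sum N zs"
    unfolding eps_def inv_sum_def
    by (simp add: sum_distrib_left sum_distrib_right sum_subtractf algebra_simps power_int_minus divide_inverse)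
  also have "exp (- of_real (real N * t) + of_real t * inv_sum N zs) =
               exp (- of_real (real N * t)) * exp (of_real t * inv_sum N zs)"
    by (rule exp_add)
  finally have "(\<Prod>i<N. exp (eps (zs ! i) * of_real t)) = exp (- of_real (real N * t)) * exp (of_real t * inv_sum N zs)" .
  moreover have "(\<Prod>i<N. zs ! i powi (x - Y ! i - 1) * exp (eps (zs ! i) * of_real t)) =
      power_factor N (kernel_exponents x Y) zs * (\<Prod>i<N. exp (eps (zs ! i) * of_real t))"
    unfolding power_factor_def prod.distrib using assms(1) by simp
  ultimately show ?thesis
    unfolding integrand_def tasep_kernel_def first_class_factor_def interaction_factor_def pole_factor_def
    by (simp add: mult_ac)
qed

definition poisson_weight :: "nat \<Rightarrow> real \<Rightarrow> nat \<Rightarrow> real" where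
  "poisson_weight N t n = exp (- real N * t) * t ^ n / fact n"

lemma has_sum_integrand:
  assumes "length Y = N" "zs \<in> torus r N" "r > 0"
  shows "((\<lambda>n. of_real (poisson_weight N t n) * (inv_sum N zs ^ n * tasep_kernel N k (kernel_exponents x Y) zs))
            has_sum integrand N k x t Y zs) UNIV"
proof -
  let ?w = "of_real t * inv_sum N zs" and ?J = "tasep_kernel N k (kernel_exponents x Y) zs"
  have "((\<lambda>n. ?w ^ n /\<^sub>R fact n) has_sum exp ?w) UNIV"
    using norm_summable_imp_has_sum[OF summable_norm_exp exp_converges] .
  from has_sum_cmult_right[OF this, of "exp (- of_real (real N * t)) * ?J"]
  show ?thesis
    unfolding integrand_eq_tasep_kernel[OF assms]
    by (simp add: poisson_weight_def scaleR_conv_of_real power_mult_distrib field_simps flip: exp_of_real)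
qed

text \<open>Expanding \<open>exp (t \<cdot> inv_sum N \<xi>)\<close> and integrating termwise; the exchange of sum and integral is
  justified by the norm bound \<open>(N / r)\<^sup>n\<close> for the Laurent coefficients of \<open>inv_sum N \<xi> ^ n\<close>.\<close>

lemma circ_ints_integrand_series:
  assumes "length Y = N" "k \<le> N" "t \<ge> 0" "0 < r" "r < 1"
  shows "circ_ints r N (integrand N k x t Y) = (\<Sum>\<^sub>\<infinity>n. of_real (poisson_weight N t n) * kernel_integral r N k x n Y)"
proof -
  let ?J = "tasep_kernel N k (kernel_exponents x Y)"
  obtain c where c: "laurent_expansion r N ?J c"
    using laurent_multiplier_imp_has_laurent_in[OF laurent_multiplier_tasep_kernel_UNIV[OF assms(2,4,5)]]
    unfolding has_laurent_in_def by auto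
  define F where "F n zs = of_real (poisson_weight N t n) * (inv_sum N zs ^ n * ?J zs)" for n zs
  define d where "d n = (\<lambda>m. of_real (poisson_weight N t n) * (inv_sum_coeffs N ^^ n) c m)" for n
  have expansion: "laurent_expansion r N (F n) (d n)" for n
    unfolding F_def d_def using laurent_expansion_inv_sum_power[OF c assms(4)] by (intro laurent_expansion_cmult) blast
  have bound: "laurent_norm r N (d n) \<le> exp (- real N * t) * laurent_norm r N c * ((t * real N / r) ^ n / fact n)" for n
  proof -
    have "0 \<le> poisson_weight N t n" using assms(3) by (simp add: poisson_weight_def)
    then have "laurent_norm r N (d n) = poisson_weight N t n * laurent_norm r N ((inv_sum_coeffs N ^^ n) c)"
      unfolding d_def laurent_norm_cmult norm_of_real by simp
    also have "\<dots> \<le> poisson_weight N t n * ((real N / r) ^ n * laurent_norm r N c)"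
      using laurent_expansion_inv_sum_power[OF c assms(4), of n] assms(3)
      by (intro mult_left_mono) (auto simp: poisson_weight_def)
    also have "\<dots> = exp (- real N * t) * laurent_norm r N c * ((t * real N / r) ^ n / fact n)"
      by (simp add: poisson_weight_def power_mult_distrib power_divide field_simps)
    finally show ?thesis .
  qed
  have "summable (\<lambda>n. exp (- real N * t) * laurent_norm r N c * ((t * real N / r) ^ n / fact n))"
    using summable_exp[of "t * real N / r"] by (intro summable_mult) (simp add: divide_inverse mult_ac)
  then have "(\<lambda>n. exp (- real N * t) * laurent_norm r N c * ((t * real N / r) ^ n / fact n)) summable_on UNIV"
    using assms laurent_norm_nonneg[of r N c]
    by (intro has_sum_imp_summable[OF sums_nonneg_imp_has_sum[OF summable_sums]]) auto
  then have norms: "(\<lambda>n. laurent_norm r N (d n)) summable_on UNIV"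
    by (rule summable_on_comparison_test) (use bound laurent_norm_nonneg assms(4) in auto)
  have "integrand N k x t Y zs = (\<Sum>\<^sub>\<infinity>n. F n zs)" if "zs \<in> torus r N" for zs
    unfolding F_def by (rule sym, rule infsumI, rule has_sum_integrand[OF assms(1) that assms(4)])
  then have "circ_ints r N (integrand N k x t Y) = circ_ints r N (\<lambda>zs. \<Sum>\<^sub>\<infinity>n. F n zs)"
    using assms(4) by (intro circ_ints_cong) auto
  also have "\<dots> = (\<Sum>\<^sub>\<infinity>n. circ_ints r N (F n))"
    by (rule circ_ints_infsum[OF expansion assms(4) norms])
  also have "\<dots> = (\<Sum>\<^sub>\<infinity>n. of_real (poisson_weight N t n) * kernel_integral r N k x n Y)"
    unfolding F_def kernel_integral_def circ_ints_cmult by (simp add: mult.commute)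
  finally show ?thesis .
qed

lemma has_sum_tasep_prob:
  assumes "t \<ge> 0"
  shows "((\<lambda>n. exp (- real N * t) * (real N * t) ^ n / fact n * jump_prob N n E s) has_sum tasep_prob N t s E) UNIV"
proof -
  let ?g = "\<lambda>n. exp (- real N * t) * (real N * t) ^ n / fact n * jump_prob N n E s"
  have nonneg: "0 \<le> ?g n" for n
    using jump_prob_bounds[of N n E s] assms by simp
  have "summable ?g"
  proof (rule summable_comparison_test')
    show "summable (\<lambda>n. exp (- real N * t) * (inverse (fact n) * (real N * t) ^ n))"
      by (intro summable_mult summable_exp)
    show "norm (?g n) \<le> exp (- real N * t) * (inverse (fact n) * (real N * t) ^ n)" for n
      using mult_left_mono[of "jump_prob N n E s" 1 "exp (- real N * t) * (real N * t) ^ n / fact n"]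
        jump_prob_bounds[of N n E s] nonneg[of n] assms
      by (simp add: divide_inverse mult_ac)
  qed
  from sums_nonneg_imp_has_sum[OF summable_sums[OF this] nonneg]
  show ?thesis unfolding tasep_prob_def .
qed

theorem theorem1p1:
  fixes N k :: nat and Y :: "int list" and x :: int and t r :: real
  assumes "N \<ge> 1" and "Y \<in> weyl N" and "t \<ge> 0" and "0 < r" and "r < 1" and "k \<le> N"
  shows "complex_of_real (tasep_prob N t (Y, nu N k) (event_E N k x)) =
           circ_ints r N (integrand N k x t Y) / (2 * of_real pi * \<i>) ^ N"
proof -
  have Y: "length Y = N" "sorted_wrt (<) Y" using assms(2) by (auto simp: weyl_def)
  let ?P = "(2 * of_real pi * \<i>) ^ N :: complex"
  let ?p = "\<lambda>n. exp (- real N * t) * (real N * t) ^ n / fact n * jump_prob N n (event_E N k x) (Y, nu N k)"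
  have "of_real (poisson_weight N t n) * kernel_integral r N k x n Y = of_real (?p n) * ?P" for n
    using kernel_integral_eq_jump_prob[OF assms(1,6,4,5) Y, of x n]
    by (simp add: poisson_weight_def power_mult_distrib mult_ac)
  with has_sum_cmult_left[OF has_sum_of_real[OF has_sum_tasep_prob[OF assms(3)]], where c = ?P]
  have "((\<lambda>n. of_real (poisson_weight N t n) * kernel_integral r N k x n Y) has_sum
          of_real (tasep_prob N t (Y, nu N k) (event_E N k x)) * ?P) UNIV"
    by simp
  then have "circ_ints r N (integrand N k x t Y) = of_real (tasep_prob N t (Y, nu N k) (event_E N k x)) * ?P"
    using circ_ints_integrand_series[OF Y(1) assms(6,3,4,5)] by (simp add: infsumI)
  then show ?thesis by simp
qed
end
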